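(* Let $W$ be a bounded real function on $\mathbb N^d$, viewed as a multiplication operator on $\ell^2(\mathbb N^d)$, satisfying (H0) $W(n)\to0$ as $|n|\to\infty$, and (H1) there are $C,\varepsilon>0$ with $|W(n+e_j)-W(n)|\le C\Lambda(n)^{-\varepsilon}\langle n_j\rangle^{-1}$ for all $j$, $n$. Then $W\in\mathcal C^1(A_{\mathbb N^d})$ and $[W,\mathrm iA_{\mathbb N^d}]\in\mathcal C^{0,1}(A_{\mathbb N^d})$. In particular $W\in\mathcal C^{1,1}(A_{\mathbb N^d})$.
   Context: $\mathbb N=\{0,1,2,\dots\}$. $\langle x\rangle=(1+x^2)^{1/2}$, $\Lambda(n)=\sum_j\langle n_j\rangle$. $A_{\mathbb N^d}=\sum_jA_{j,+}$, $A_{j,+}=-\frac{\mathrm i\,\mathrm{sign}(r_j)}2(U_{j,+}(Q_j+\frac12)-(Q_j+\frac12)U_{j,+}^* )$ for fixed $\vec r$ with nonzero components, $U_{j,+}$ unilateral shift ($(U_{j,+}f)(n)=f(n-e_j)$ if $n_j\ge1$, $0$ otherwise), $(Q_jf)(n)=n_jf(n)$, closure from finitely supported functions; $[W,\mathrm iA]$ is the bounded extension of the form commutator. For bounded $T$: $T\in\mathcal C^1(A)$ iff $s\mapsto e^{\mathrm isA}Te^{-\mathrm isA}$ is strongly $C^1$; $T\in\mathcal C^{0,1}(A)$ iff $\int_0^1\|e^{\mathrm isA}Te^{-\mathrm isA}-T\|ds/s<\infty$; $T\in\mathcal C^{1,1}(A)$ iff $\int_0^1\|e^{\mathrm isA}Te^{-\mathrm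 isA}+e^{-\mathrm isA}Te^{\mathrm isA}-2T\|ds/s^2<\infty$. *)

theory Defs
  imports "HOL-Analysis.Analysis"
begin

text \<open>Sequences on N^d: index type 'd (finite, d = CARD('d)), points n :: 'd => nat.
 Operators are functions on such sequences; only their action on l^2 matters.\<close>

type_synonym 'd seq = "('d \<Rightarrow> nat) \<Rightarrow> complex"

definition l2 :: "('a \<Rightarrow> complex) set" where
  "l2 = {f. (\<lambda>n. (cmod (f n))^2) summable_on UNIV}"

definition l2norm :: "('a \<Rightarrow> complex) \<Rightarrow> real" where
  "l2norm f = sqrt (infsum (\<lambda>n. (cmod (f n))^2) UNIV)"

definition l2inner :: "('a \<Rightarrow> complex) \<Rightarrow> ('a \<Rightarrow> complex) \<Rightarrow> complex" where
  "l2inner f g = infsum (\<lambda>n. cnj (f n) * g n) UNIV"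

definition l2_tendsto :: "('b \<Rightarrow> 'a \<Rightarrow> complex) \<Rightarrow> ('a \<Rightarrow> complex) \<Rightarrow> 'b filter \<Rightarrow> bool" where
  "l2_tendsto F g Fl \<longleftrightarrow> ((\<lambda>s. l2norm (\<lambda>n. F s n - g n)) \<longlongrightarrow> 0) Fl"

definition bounded_op :: "(('a \<Rightarrow> complex) \<Rightarrow> ('a \<Rightarrow> complex)) \<Rightarrow> bool" where
  "bounded_op T \<longleftrightarrow> (\<forall>f\<in>l2. T f \<in> l2)
     \<and> (\<forall>f\<in>l2. \<forall>g\<in>l2. \<forall>a b. T (\<lambda>n. a * f n + b * g n) = (\<lambda>n. a * T f n + b * T g n))
     \<and> (\<exists>M. \<forall>f\<in>l2. l2norm (T f) \<le> M * l2norm f)"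

definition op_norm :: "(('a \<Rightarrow> complex) \<Rightarrow> ('a \<Rightarrow> complex)) \<Rightarrow> real" where
  "op_norm T = (SUP f\<in>{f\<in>l2. l2norm f \<le> 1}. l2norm (T f))"

definition mult_op :: "('a \<Rightarrow> real) \<Rightarrow> ('a \<Rightarrow> complex) \<Rightarrow> ('a \<Rightarrow> complex)" where
  "mult_op W f = (\<lambda>n. complex_of_real (W n) * f n)"

text \<open>A_{j,+} = -(i sign(r_j)/2) (U_{j,+}(Q_j+1/2) - (Q_j+1/2) U_{j,+}^*), written out on functions.\<close>
definition A_plus :: "('d \<Rightarrow> real) \<Rightarrow> 'd \<Rightarrow> 'd seq \<Rightarrow> 'd seq" where
  "A_plus r j f = (\<lambda>n. - (\<i> * complex_of_real (sgn (r j)) / 2) *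
      ((if 1 \<le> n j then complex_of_real (real (n j) - 1/2) * f (n(j := n j - 1)) else 0)
       - complex_of_real (real (n j) + 1/2) * f (n(j := n j + 1))))"

definition A0 :: "('d::finite \<Rightarrow> real) \<Rightarrow> 'd seq \<Rightarrow> 'd seq" where
  "A0 r f = (\<lambda>n. \<Sum>j\<in>UNIV. A_plus r j f n)"

definition fin_supp :: "('a \<Rightarrow> complex) \<Rightarrow> bool" where
  "fin_supp f \<longleftrightarrow> finite {n. f n \<noteq> 0}"

text \<open>Graph of the closure A_{N^d} of A0 defined on finitely supported functions:
  A_graph r f g  means  f \<in> D(A) and A f = g.\<close>
definition A_graph :: "('d::finite \<Rightarrow> real) \<Rightarrow> 'd seq \<Rightarrow> 'd seq \<Rightarrow> bool" where
  "A_graph r f g \<longleftrightarrow> f \<in> l2 \<and> g \<in> l2 \<and>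
     (\<exists>fk. (\<forall>k. fin_supp (fk k)) \<and> l2_tendsto fk f sequentially
           \<and> l2_tendsto (\<lambda>k. A0 r (fk k)) g sequentially)"

text \<open>U is the strongly continuous unitary group e^{isA} generated by the self-adjoint
  operator with graph G (Stone's theorem): U s is unitary on l^2, U is a strongly continuous
  one-parameter group, and its generator is iA, i.e. (U s f - f)/s converges in l^2 as s->0
  exactly for f in D(A), with limit i A f.\<close>
definition unitary_group_gen :: "(real \<Rightarrow> 'd seq \<Rightarrow> 'd seq) \<Rightarrow> ('d seq \<Rightarrow> 'd seq \<Rightarrow> bool) \<Rightarrow> bool" where
  "unitary_group_gen U G \<longleftrightarrow>
     (\<forall>s. bounded_op (U s) \<and> U s ` l2 = l2 \<and> (\<forall>f\<in>l2. l2norm (U s f) = l2norm f))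
   \<and> (\<forall>f\<in>l2. U 0 f = f)
   \<and> (\<forall>s t. \<forall>f\<in>l2. U (s + t) f = U s (U t f))
   \<and> (\<forall>f\<in>l2. \<forall>s0. l2_tendsto (\<lambda>s. U s f) (U s0 f) (at s0))
   \<and> (\<forall>f\<in>l2. \<forall>g. (g \<in> l2 \<and> l2_tendsto (\<lambda>s. \<lambda>n. (U s f n - f n) / complex_of_real s) g (at 0))
                  \<longleftrightarrow> (\<exists>h. G f h \<and> g = (\<lambda>n. \<i> * h n)))"

definition strongly_C1 :: "(real \<Rightarrow> ('a \<Rightarrow> complex)) \<Rightarrow> bool" where
  "strongly_C1 F \<longleftrightarrow> (\<exists>D. (\<forall>s. D s \<in> l2 \<and>
        l2_tendsto (\<lambda>h. \<lambda>n. (F (s + h) n - F s n) / complex_of_real h) (D s) (at 0))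
      \<and> (\<forall>s. l2_tendsto D (D s) (at s)))"

definition C1_class :: "(real \<Rightarrow> 'd seq \<Rightarrow> 'd seq) \<Rightarrow> ('d seq \<Rightarrow> 'd seq) \<Rightarrow> bool" where
  "C1_class U T \<longleftrightarrow> bounded_op T \<and> (\<forall>f\<in>l2. strongly_C1 (\<lambda>s. U s (T (U (- s) f))))"

definition C01_class :: "(real \<Rightarrow> 'd seq \<Rightarrow> 'd seq) \<Rightarrow> ('d seq \<Rightarrow> 'd seq) \<Rightarrow> bool" where
  "C01_class U T \<longleftrightarrow> bounded_op T \<and>
     (\<integral>\<^sup>+ s \<in> {0<..1}. ennreal (op_norm (\<lambda>f. \<lambda>n. U s (T (U (- s) f)) n - T f n) / s) \<partial>lborel) < \<infinity>"

definition C11_class :: "(real \<Rightarrow> 'd seq \<Rightarrow> 'd seq) \<Rightarrow> ('d seq \<Rightarrow> 'd seq) \<Rightarrow> bool" where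
  "C11_class U T \<longleftrightarrow> bounded_op T \<and>
     (\<integral>\<^sup>+ s \<in> {0<..1}. ennreal (op_norm (\<lambda>f. \<lambda>n. U s (T (U (- s) f)) n + U (- s) (T (U s f)) n - 2 * T f n) / s^2) \<partial>lborel) < \<infinity>"

definition jbr :: "real \<Rightarrow> real" where "jbr x = sqrt (1 + x^2)"

definition Lambda :: "('d::finite \<Rightarrow> nat) \<Rightarrow> real" where
  "Lambda n = (\<Sum>j\<in>UNIV. jbr (real (n j)))"

definition eucl_abs :: "('d::finite \<Rightarrow> nat) \<Rightarrow> real" where
  "eucl_abs n = sqrt (\<Sum>j\<in>UNIV. (real (n j))^2)"

end

(*
  For f, g in the domain of A, the derivative of <g, e^{itA} W e^{-itA} f> is
  -<g, e^{itA} B e^{-itA} f>, where B is the commutator [W, iA] written out as a difference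
  operator on N^d (comm_op). By (H1) its coefficients are O(Lambda^-eps), in particular bounded.
  These derivatives converge uniformly when f and g are approximated from the domain, so the
  identity holds for all f, g, and a mean value argument makes the derivative a strong one:
  W is of class C^1(A).

  For the Hoelder continuity of t -> e^{itA} B e^{-itA}, cut off to the finite set
  {Lambda <= R}. The cut-off P_R maps into D(A) with ||A P_R|| <= c R, while (H1) gives
  ||(1 - P_R) B|| + ||B (1 - P_R)|| <= c R^-eps. Hence ||e^{itA} B e^{-itA} - B|| <= c (|t| R + R^-eps),
  and R = |t|^(-1/(1+eps)) gives the exponent delta = eps/(1+eps), so the C^{0,1} integral is
  finite. The mean value theorem then bounds the second difference of s -> e^{isA} W e^{-isA}
  by c s^(1+delta), which is the C^{1,1} estimate.
*)
theory Submission
  imports Defs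
begin

section \<open>Square-summable sequences\<close>

lemma l2_zero [simp]: "(\<lambda>_. 0) \<in> l2"
  by (simp add: l2_def)

lemma cmod_add_sq_le: "(cmod (a + b))^2 \<le> 2 * (cmod a)^2 + 2 * (cmod b)^2"
proof -
  have "(cmod (a + b))^2 \<le> (cmod a + cmod b)^2"
    by (simp add: norm_triangle_ineq power_mono)
  also have "\<dots> \<le> 2 * (cmod a)^2 + 2 * (cmod b)^2"
    using zero_le_power2[of "cmod a - cmod b"] by (simp add: power2_diff power2_sum)
  finally show ?thesis .
qed

lemma l2_add: "f \<in> l2 \<Longrightarrow> g \<in> l2 \<Longrightarrow> (\<lambda>n. f n + g n) \<in> l2"
  unfolding l2_def mem_Collect_eq
  by (rule summable_on_comparison_test[where f = "\<lambda>n. 2 * (cmod (f n))^2 + 2 * (cmod (g n))^2"])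
    (auto intro!: summable_on_add summable_on_cmult_right simp: cmod_add_sq_le)

lemma l2_mult_bounded:
  assumes "f \<in> l2" "\<And>n. cmod (c n) \<le> M"
  shows "(\<lambda>n. c n * f n) \<in> l2"
  unfolding l2_def mem_Collect_eq
proof (rule summable_on_comparison_test)
  show "(\<lambda>n. M^2 * (cmod (f n))^2) summable_on UNIV"
    using assms(1) by (simp add: l2_def summable_on_cmult_right)
  show "(cmod (c n * f n))^2 \<le> M^2 * (cmod (f n))^2" for n
    using assms(2)[of n] by (simp add: norm_mult power_mult_distrib mult_right_mono power_mono)
qed simp

lemma l2_scale: "f \<in> l2 \<Longrightarrow> (\<lambda>n. c * f n) \<in> l2"
  using l2_mult_bounded[of f "\<lambda>_. c" "cmod c"] by simp

lemma l2_uminus: "f \<in> l2 \<Longrightarrow> (\<lambda>n. - f n) \<in> l2"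
  using l2_scale[of f "-1"] by simp

lemma l2_diff: "f \<in> l2 \<Longrightarrow> g \<in> l2 \<Longrightarrow> (\<lambda>n. f n - g n) \<in> l2"
  using l2_add[of f "\<lambda>n. - g n"] l2_uminus[of g] by simp

lemma fin_supp_iff: "fin_supp f \<longleftrightarrow> (\<exists>S. finite S \<and> (\<forall>n. n \<notin> S \<longrightarrow> f n = 0))"
  unfolding fin_supp_def by (metis (mono_tags, lifting) finite_subset mem_Collect_eq subsetI)

lemma fin_supp_l2: "fin_supp f \<Longrightarrow> f \<in> l2"
  unfolding fin_supp_def l2_def mem_Collect_eq
  by (rule summable_on_cong_neutral[where S = "{n. f n \<noteq> 0}", THEN iffD1]) auto

lemma l2norm_nonneg: "0 \<le> l2norm f"
  by (simp add: l2norm_def infsum_nonneg)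

lemma l2norm_le_sqrt_bound:
  assumes "infsum (\<lambda>n. (cmod (g n))^2) UNIV \<le> M^2 * infsum (\<lambda>n. (cmod (f n))^2) UNIV" "0 \<le> M"
  shows "l2norm g \<le> M * l2norm f"
proof -
  have "l2norm g \<le> sqrt (M^2 * infsum (\<lambda>n. (cmod (f n))^2) UNIV)"
    unfolding l2norm_def using assms(1) by simp
  also have "\<dots> = M * l2norm f"
    using assms(2) by (simp add: l2norm_def real_sqrt_mult)
  finally show ?thesis .
qed

lemma l2norm_mult_bounded:
  assumes f: "f \<in> l2" and c: "\<And>n. cmod (c n) \<le> M"
  shows "l2norm (\<lambda>n. c n * f n) \<le> M * l2norm f"
proof -
  have M: "0 \<le> M" using c[of undefined] norm_ge_zero order.trans by blast
  have fs: "(\<lambda>n. (cmod (f n))^2) summable_on UNIV" using f by (simp add: l2_def)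
  have gs: "(\<lambda>n. (cmod (c n * f n))^2) summable_on UNIV"
    using l2_mult_bounded[OF f c] by (simp add: l2_def)
  have "infsum (\<lambda>n. (cmod (c n * f n))^2) UNIV \<le> infsum (\<lambda>n. M^2 * (cmod (f n))^2) UNIV"
    using c by (intro infsum_mono[OF gs summable_on_cmult_right[OF fs]])
      (simp add: norm_mult power_mult_distrib mult_right_mono power_mono)
  also have "\<dots> = M^2 * infsum (\<lambda>n. (cmod (f n))^2) UNIV"
    by (simp add: infsum_cmult_right')
  finally show ?thesis using M by (rule l2norm_le_sqrt_bound)
qed

lemma l2norm_scale: "l2norm (\<lambda>n. c * f n) = cmod c * l2norm f"
  by (simp add: l2norm_def norm_mult power_mult_distrib infsum_cmult_right' real_sqrt_mult)

lemma l2inner_summable: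
  assumes "f \<in> l2" "g \<in> l2"
  shows "(\<lambda>n. cnj (f n) * g n) summable_on UNIV"
proof -
  have "(\<lambda>n. cmod (cnj (f n) * g n)) summable_on UNIV"
  proof (rule summable_on_comparison_test)
    show "(\<lambda>n. (cmod (f n))^2 + (cmod (g n))^2) summable_on UNIV"
      using assms by (auto simp: l2_def intro!: summable_on_add)
    show "cmod (cnj (f n) * g n) \<le> (cmod (f n))^2 + (cmod (g n))^2" for n
      using zero_le_power2[of "cmod (f n) - cmod (g n)"]
        mult_nonneg_nonneg[OF norm_ge_zero norm_ge_zero, of "f n" "g n"]
      unfolding power2_diff norm_mult complex_mod_cnj by linarith
  qed simp
  then show ?thesis by (rule abs_summable_summable)
qed

lemma l2inner_self:
  assumes "f \<in> l2"
  shows "l2inner f f = complex_of_real (infsum (\<lambda>n. (cmod (f n))^2) UNIV)"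
proof -
  have "(\<lambda>n. cnj (f n) * f n) = (\<lambda>n. complex_of_real ((cmod (f n))^2))"
    by (metis complex_norm_square mult.commute)
  moreover have "(\<lambda>n. (cmod (f n))^2) summable_on UNIV"
    using assms by (simp add: l2_def)
  ultimately show ?thesis
    unfolding l2inner_def by (metis infsumI has_sum_of_real has_sum_infsum)
qed

lemma l2inner_scale_left: "l2inner (\<lambda>n. c * f n) g = cnj c * l2inner f g"
  unfolding l2inner_def by (simp add: mult.assoc infsum_cmult_right')

lemma l2inner_scale_right: "l2inner f (\<lambda>n. c * g n) = c * l2inner f g"
  unfolding l2inner_def by (simp add: mult.left_commute infsum_cmult_right')

lemma l2inner_commute: "l2inner g f = cnj (l2inner f g)"
  unfolding l2inner_def infsum_cnj[symmetric] by (simp add: mult.commute)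

lemma l2inner_add_left:
  assumes "f \<in> l2" "g \<in> l2" "h \<in> l2"
  shows "l2inner (\<lambda>n. f n + g n) h = l2inner f h + l2inner g h"
proof -
  have "(\<lambda>n. cnj (f n + g n) * h n) = (\<lambda>n. cnj (f n) * h n + cnj (g n) * h n)"
    by (simp add: algebra_simps)
  then show ?thesis
    unfolding l2inner_def using assms by (simp add: infsum_add l2inner_summable)
qed

lemma l2inner_add_right:
  assumes "f \<in> l2" "g \<in> l2" "h \<in> l2"
  shows "l2inner h (\<lambda>n. f n + g n) = l2inner h f + l2inner h g"
proof -
  have "(\<lambda>n. cnj (h n) * (f n + g n)) = (\<lambda>n. cnj (h n) * f n + cnj (h n) * g n)"
    by (simp add: algebra_simps)
  then show ?thesis
    unfolding l2inner_def using assms by (simp add: infsum_add l2inner_summable)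
qed

lemma l2inner_fin_supp:
  assumes "finite S" "\<And>n. n \<notin> S \<Longrightarrow> f n = 0 \<or> g n = 0"
  shows "l2inner f g = (\<Sum>n\<in>S. cnj (f n) * g n)"
proof -
  have "infsum (\<lambda>n. cnj (f n) * g n) UNIV = infsum (\<lambda>n. cnj (f n) * g n) S"
    by (rule infsum_cong_neutral) (use assms in auto)
  then show ?thesis using assms(1) by (simp add: l2inner_def)
qed

typedef 'a l2vec = "l2 :: ('a \<Rightarrow> complex) set"
  by (rule exI[of _ "\<lambda>_. 0"]) simp

setup_lifting type_definition_l2vec

text \<open>Complex \<open>\<ell>\<^sup>2\<close> as a real inner product space (inner product \<open>Re \<langle>f, g\<rangle>\<close>), so that the
  abstract arguments below, stated for \<open>real_inner\<close>, apply to it.\<close>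

instantiation l2vec :: (type) real_vector
begin
lift_definition zero_l2vec :: "'a l2vec" is "\<lambda>_. 0" by simp
lift_definition plus_l2vec :: "'a l2vec \<Rightarrow> 'a l2vec \<Rightarrow> 'a l2vec" is "\<lambda>f g n. f n + g n"
  by (rule l2_add)
lift_definition uminus_l2vec :: "'a l2vec \<Rightarrow> 'a l2vec" is "\<lambda>f n. - f n"
  by (rule l2_uminus)
lift_definition minus_l2vec :: "'a l2vec \<Rightarrow> 'a l2vec \<Rightarrow> 'a l2vec" is "\<lambda>f g n. f n - g n"
  by (rule l2_diff)
lift_definition scaleR_l2vec :: "real \<Rightarrow> 'a l2vec \<Rightarrow> 'a l2vec" is "\<lambda>r f n. complex_of_real r * f n"
  by (rule l2_scale)
instance
  by standard (transfer; simp add: algebra_simps)+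
end

instantiation l2vec :: (type) real_inner
begin
lift_definition inner_l2vec :: "'a l2vec \<Rightarrow> 'a l2vec \<Rightarrow> real" is "\<lambda>f g. Re (l2inner f g)" .
definition norm_l2vec :: "'a l2vec \<Rightarrow> real" where "norm_l2vec x = sqrt (inner x x)"
definition dist_l2vec :: "'a l2vec \<Rightarrow> 'a l2vec \<Rightarrow> real" where "dist_l2vec x y = norm (x - y)"
definition sgn_l2vec :: "'a l2vec \<Rightarrow> 'a l2vec" where "sgn_l2vec x = inverse (norm x) *\<^sub>R x"
definition uniformity_l2vec :: "('a l2vec \<times> 'a l2vec) filter" where
  "uniformity_l2vec = (INF e\<in>{0<..}. principal {(x, y). dist x y < e})"
definition open_l2vec :: "'a l2vec set \<Rightarrow> bool" where
  "open_l2vec U = (\<forall>x\<in>U. eventually (\<lambda>(x', y). x' = x \<longrightarrow> y \<in> U) uniformity)"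
instance
proof
  fix x y z :: "'a l2vec" and a :: real
  show "sgn x = x /\<^sub>R norm x" by (simp add: sgn_l2vec_def)
  show "dist x y = norm (x - y)" by (simp add: dist_l2vec_def)
  show "(uniformity :: ('a l2vec \<times> 'a l2vec) filter) = (INF e\<in>{0<..}. principal {(x, y). dist x y < e})"
    by (simp add: uniformity_l2vec_def)
  show "\<And>U :: 'a l2vec set. open U = (\<forall>x\<in>U. \<forall>\<^sub>F (x', y) in uniformity. x' = x \<longrightarrow> y \<in> U)"
    by (simp add: open_l2vec_def)
  show "norm x = sqrt (inner x x)" by (simp add: norm_l2vec_def)
  show "inner x y = inner y x"
    by transfer (subst l2inner_commute, simp)
  show "inner (x + y) z = inner x z + inner y z"
    by transfer (simp add: l2inner_add_left)
  show "inner (a *\<^sub>R x) y = a * inner x y"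
    by transfer (simp add: l2inner_scale_left)
  show "0 \<le> inner x x"
    by transfer (simp add: l2inner_self infsum_nonneg)
  show "inner x x = 0 \<longleftrightarrow> x = 0"
  proof transfer
    fix f :: "'a \<Rightarrow> complex" assume f: "f \<in> l2"
    have s: "(\<lambda>n. (cmod (f n))^2) summable_on UNIV" using f by (simp add: l2_def)
    show "Re (l2inner f f) = 0 \<longleftrightarrow> f = (\<lambda>_. 0)"
    proof
      assume "Re (l2inner f f) = 0"
      then have "infsum (\<lambda>n. (cmod (f n))^2) UNIV \<le> 0" using f by (simp add: l2inner_self)
      then have "(cmod (f n))^2 = 0" for n using nonneg_infsum_le_0D[OF _ s] by simp
      then show "f = (\<lambda>_. 0)" by auto
    qed (simp add: l2inner_def)
  qed
qed
end

lemma norm_l2vec_eq: "norm x = l2norm (Rep_l2vec x)"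
  unfolding norm_l2vec_def l2norm_def inner_l2vec.rep_eq
  using Rep_l2vec[of x] by (simp add: l2inner_self)

lemma Rep_l2vec_plus: "Rep_l2vec (x + y) = (\<lambda>n. Rep_l2vec x n + Rep_l2vec y n)"
  by transfer simp
lemma Rep_l2vec_minus: "Rep_l2vec (x - y) = (\<lambda>n. Rep_l2vec x n - Rep_l2vec y n)"
  by transfer simp
lemma Rep_l2vec_zero: "Rep_l2vec 0 = (\<lambda>_. 0)"
  by transfer simp
lemma Rep_l2vec_scaleR: "Rep_l2vec (a *\<^sub>R x) = (\<lambda>n. complex_of_real a * Rep_l2vec x n)"
  by transfer simp
lemma Rep_l2vec_sum: "finite S \<Longrightarrow> Rep_l2vec (\<Sum>j\<in>S. x j) = (\<lambda>n. \<Sum>j\<in>S. Rep_l2vec (x j) n)"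
  by (induction S rule: finite_induct) (simp_all add: Rep_l2vec_zero Rep_l2vec_plus)

lemma l2norm_Abs_l2vec: "f \<in> l2 \<Longrightarrow> l2norm f = norm (Abs_l2vec f)"
  by (simp add: norm_l2vec_eq Abs_l2vec_inverse)

lemma Abs_l2vec_diff: "f \<in> l2 \<Longrightarrow> g \<in> l2 \<Longrightarrow> Abs_l2vec (\<lambda>n. f n - g n) = Abs_l2vec f - Abs_l2vec g"
  by (simp add: Rep_l2vec_inject[symmetric] Rep_l2vec_minus Abs_l2vec_inverse l2_diff)

lemma l2_tendsto_iff_tendsto:
  assumes "\<And>s. F s \<in> l2" "g \<in> l2"
  shows "l2_tendsto F g Fl \<longleftrightarrow> ((\<lambda>s. Abs_l2vec (F s)) \<longlongrightarrow> Abs_l2vec g) Fl"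
proof -
  have "l2norm (\<lambda>n. F s n - g n) = norm (Abs_l2vec (F s) - Abs_l2vec g)" for s
    using assms by (simp add: l2norm_Abs_l2vec l2_diff Abs_l2vec_diff)
  then show ?thesis
    unfolding l2_tendsto_def by (simp add: tendsto_norm_zero_iff LIM_zero_iff)
qed

lemma l2_tendsto_Rep_l2vec_iff: "l2_tendsto (\<lambda>s. Rep_l2vec (X s)) (Rep_l2vec x) F \<longleftrightarrow> (X \<longlongrightarrow> x) F"
  using l2_tendsto_iff_tendsto[of "\<lambda>s. Rep_l2vec (X s)" "Rep_l2vec x"]
  by (simp add: Rep_l2vec Rep_l2vec_inverse)

lemma norm_l2inner_le:
  assumes "f \<in> l2" "g \<in> l2"
  shows "cmod (l2inner f g) \<le> l2norm f * l2norm g"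
proof (cases "l2inner f g = 0")
  case True then show ?thesis by (simp add: l2norm_nonneg)
next
  case False
  define u where "u = cnj (l2inner f g) / cmod (l2inner f g)"
  have u: "cmod u = 1" using False by (simp add: u_def norm_divide)
  have "cnj (l2inner f g) * l2inner f g = cmod (l2inner f g) * cmod (l2inner f g)"
    by (metis complex_norm_square mult.commute power2_eq_square)
  then have "u * l2inner f g = cmod (l2inner f g)"
    using False by (simp add: u_def)
  then have "cmod (l2inner f g) = inner (Abs_l2vec f) (Abs_l2vec (\<lambda>n. u * g n))"
    using assms by (simp add: inner_l2vec.rep_eq Abs_l2vec_inverse l2_scale l2inner_scale_right)
  also have "\<dots> \<le> norm (Abs_l2vec f) * norm (Abs_l2vec (\<lambda>n. u * g n))"
    by (rule order.trans[OF Cauchy_Schwarz_ineq2[THEN abs_le_D1]]) simp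
  also have "\<dots> = l2norm f * l2norm g"
    using assms by (simp add: l2norm_Abs_l2vec[symmetric] l2_scale l2norm_scale u)
  finally show ?thesis .
qed

lemma bounded_bilinear_l2inner: "bounded_bilinear (\<lambda>x y. l2inner (Rep_l2vec x) (Rep_l2vec y))"
proof
  fix a a' b b' :: "'a l2vec" and r :: real
  show "l2inner (Rep_l2vec (a + a')) (Rep_l2vec b) = l2inner (Rep_l2vec a) (Rep_l2vec b) + l2inner (Rep_l2vec a') (Rep_l2vec b)"
    by (simp add: Rep_l2vec_plus l2inner_add_left Rep_l2vec)
  show "l2inner (Rep_l2vec a) (Rep_l2vec (b + b')) = l2inner (Rep_l2vec a) (Rep_l2vec b) + l2inner (Rep_l2vec a) (Rep_l2vec b')"
    by (simp add: Rep_l2vec_plus l2inner_add_right Rep_l2vec)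
  show "l2inner (Rep_l2vec (r *\<^sub>R a)) (Rep_l2vec b) = r *\<^sub>R l2inner (Rep_l2vec a) (Rep_l2vec b)"
    by (simp add: Rep_l2vec_scaleR l2inner_scale_left scaleR_conv_of_real)
  show "l2inner (Rep_l2vec a) (Rep_l2vec (r *\<^sub>R b)) = r *\<^sub>R l2inner (Rep_l2vec a) (Rep_l2vec b)"
    by (simp add: Rep_l2vec_scaleR l2inner_scale_right scaleR_conv_of_real)
next
  show "\<exists>K. \<forall>a b :: 'a l2vec. norm (l2inner (Rep_l2vec a) (Rep_l2vec b)) \<le> norm a * norm b * K"
    by (rule exI[of _ 1]) (simp add: norm_l2vec_eq norm_l2inner_le Rep_l2vec)
qed

lemma l2inner_tendsto:
  assumes "\<And>k. a k \<in> l2" "\<And>k. b k \<in> l2" "a0 \<in> l2" "b0 \<in> l2"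
    and "l2_tendsto a a0 F" "l2_tendsto b b0 F"
  shows "((\<lambda>k. l2inner (a k) (b k)) \<longlongrightarrow> l2inner a0 b0) F"
proof -
  have "((\<lambda>k. l2inner (Rep_l2vec (Abs_l2vec (a k))) (Rep_l2vec (Abs_l2vec (b k))))
      \<longlongrightarrow> l2inner (Rep_l2vec (Abs_l2vec a0)) (Rep_l2vec (Abs_l2vec b0))) F"
    using assms by (intro bounded_bilinear.tendsto[OF bounded_bilinear_l2inner])
      (simp_all add: l2_tendsto_iff_tendsto[symmetric])
  then show ?thesis using assms by (simp add: Abs_l2vec_inverse)
qed


section \<open>Conjugation by a strongly continuous unitary group\<close>

lemma has_vector_derivative_if_quotient_tendsto:
  fixes f :: "real \<Rightarrow> 'v::real_normed_vector"
  assumes "((\<lambda>k. (f (t + k) - f t) /\<^sub>R k) \<longlongrightarrow> v) (at 0)"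
  shows "(f has_vector_derivative v) (at t)"
  unfolding has_vector_derivative_def has_derivative_at
proof (intro conjI)
  show "bounded_linear (\<lambda>h. h *\<^sub>R v)" by (rule bounded_linear_scaleR_left)
  have "((\<lambda>k. norm ((f (t + k) - f t) /\<^sub>R k - v)) \<longlongrightarrow> 0) (at 0)"
    using tendsto_norm_zero[OF LIM_zero[OF assms]] by simp
  moreover have "\<forall>\<^sub>F k in at 0. norm ((f (t + k) - f t) /\<^sub>R k - v) = norm (f (t + k) - f t - k *\<^sub>R v) / norm k"
  proof (rule eventually_mono[OF eventually_neq_at_within[of 0 0 UNIV]])
    fix k :: real assume "k \<noteq> 0"
    then have "(f (t + k) - f t) /\<^sub>R k - v = (1 / k) *\<^sub>R (f (t + k) - f t - k *\<^sub>R v)"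
      by (simp add: scaleR_diff_right divide_inverse_commute)
    then show "norm ((f (t + k) - f t) /\<^sub>R k - v) = norm (f (t + k) - f t - k *\<^sub>R v) / norm k"
      by (simp add: divide_simps)
  qed
  ultimately show "((\<lambda>h. norm (f (t + h) - f t - h *\<^sub>R v) / norm h) \<longlongrightarrow> 0) (at 0)"
    by (rule Lim_transform_eventually)
qed

lemma MVT_between:
  fixes g g' :: "real \<Rightarrow> real"
  assumes "\<And>t. (g has_real_derivative g' t) (at t)"
  shows "\<exists>\<xi>. min a b \<le> \<xi> \<and> \<xi> \<le> max a b \<and> g b - g a = (b - a) * g' \<xi>"
proof -
  have MVT': "\<exists>\<xi>. a < \<xi> \<and> \<xi> < b \<and> g b - g a = (b - a) * g' \<xi>" if ab: "a < b" for a b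
  proof -
    have "continuous_on {a..b} g"
      using assms by (meson DERIV_isCont continuous_at_imp_continuous_on)
    moreover have "g differentiable (at x)" for x
      using assms real_differentiable_def by blast
    ultimately obtain l \<xi> where "a < \<xi>" "\<xi> < b" "DERIV g \<xi> :> l" "g b - g a = (b - a) * l"
      using MVT[OF ab] by blast
    then show ?thesis using DERIV_unique[OF _ assms] by blast
  qed
  consider "a < b" | "a = b" | "b < a" by linarith
  then show ?thesis
  proof cases
    case 1
    then obtain \<xi> where "a < \<xi>" "\<xi> < b" "g b - g a = (b - a) * g' \<xi>" using MVT' by blast
    then show ?thesis using 1 by (intro exI[of _ \<xi>]) auto
  next
    case 3
    then obtain \<xi> where "b < \<xi>" "\<xi> < a" "g a - g b = (a - b) * g' \<xi>" using MVT' by blast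
    then show ?thesis using 3 by (intro exI[of _ \<xi>]) (auto simp: algebra_simps)
  qed auto
qed

lemma norm_le_if_inner_self_le:
  fixes v :: "'v::real_inner"
  assumes "0 \<le> M" "inner v v \<le> norm v * M"
  shows "norm v \<le> M"
proof (cases "v = 0")
  case False
  then have "norm v * norm v \<le> norm v * M"
    using assms(2) by (simp add: power2_norm_eq_inner[symmetric] power2_eq_square)
  then show ?thesis using False by simp
qed (use assms in simp)

lemma powr_balance:
  fixes t \<epsilon> :: real
  assumes t: "0 < t" "t \<le> 1" and \<epsilon>: "0 < \<epsilon>"
  shows "1 \<le> t powr (- 1 / (1 + \<epsilon>))"
    and "t * t powr (- 1 / (1 + \<epsilon>)) = t powr (\<epsilon> / (1 + \<epsilon>))"
    and "(t powr (- 1 / (1 + \<epsilon>))) powr - \<epsilon> = t powr (\<epsilon> / (1 + \<epsilon>))"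
proof -
  show "1 \<le> t powr (- 1 / (1 + \<epsilon>))"
    using powr_mono2'[of "- 1 / (1 + \<epsilon>)" t 1] t \<epsilon> by simp
  have "t * t powr (- 1 / (1 + \<epsilon>)) = t powr 1 * t powr (- 1 / (1 + \<epsilon>))"
    using t by simp
  also have "\<dots> = t powr (1 + - 1 / (1 + \<epsilon>))"
    by (rule powr_add[symmetric])
  also have "1 + - 1 / (1 + \<epsilon>) = \<epsilon> / (1 + \<epsilon>)"
    using \<epsilon> by (simp add: field_simps)
  finally show "t * t powr (- 1 / (1 + \<epsilon>)) = t powr (\<epsilon> / (1 + \<epsilon>))" .
  show "(t powr (- 1 / (1 + \<epsilon>))) powr - \<epsilon> = t powr (\<epsilon> / (1 + \<epsilon>))"
    using \<epsilon> by (simp add: powr_powr field_simps)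
qed

locale unitary_group =
  fixes U :: "real \<Rightarrow> 'v::real_inner \<Rightarrow> 'v" and D :: "'v set" and iA :: "'v \<Rightarrow> 'v"
  assumes U_linear: "\<And>s. linear (U s)"
    and norm_U: "\<And>s x. norm (U s x) = norm x"
    and U_U: "\<And>s t x. U s (U t x) = U (s + t) x"
    and U_0: "\<And>x. U 0 x = x"
    and U_continuous: "\<And>x s0. ((\<lambda>s. U s x) \<longlongrightarrow> U s0 x) (at s0)"
    and generator: "\<And>x. x \<in> D \<Longrightarrow> ((\<lambda>k. (U k x - x) /\<^sub>R k) \<longlongrightarrow> iA x) (at 0)"
    and domain: "\<And>x y. ((\<lambda>k. (U k x - x) /\<^sub>R k) \<longlongrightarrow> y) (at 0) \<Longrightarrow> x \<in> D"
    and domain_dense: "\<And>x e. e > 0 \<Longrightarrow> \<exists>d\<in>D. norm (x - d) < e"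
begin

lemma bounded_linear_U: "bounded_linear (U s)"
  using U_linear[of s] norm_U
  by (auto intro!: bounded_linear_intro[where K = 1] simp: linear_add linear_scale)

lemma U_diff: "U s (x - y) = U s x - U s y"
  using U_linear linear_diff by blast

lemma U_scaleR: "U s (c *\<^sub>R x) = c *\<^sub>R U s x"
  using U_linear linear_scale by blast

lemma U_inverse: "U s (U (- s) x) = x" "U (- s) (U s x) = x"
  by (simp_all add: U_U U_0)

lemma inner_U_U: "inner (U s x) (U s y) = inner x y"
proof -
  have "norm (U s (x + y))^2 = norm (x + y)^2" by (simp add: norm_U)
  moreover have "U s (x + y) = U s x + U s y" using U_linear linear_add by blast
  moreover have "inner (U s x) (U s x) = inner x x" "inner (U s y) (U s y) = inner y y"
    using norm_U by (metis power2_norm_eq_inner)+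
  ultimately show ?thesis
    by (simp add: power2_norm_eq_inner inner_add inner_commute)
qed

lemma inner_U_left: "inner (U s x) y = inner x (U (- s) y)"
  using inner_U_U[of s x "U (- s) y"] by (simp add: U_inverse)

lemma tendsto_U_comp:
  assumes "(w \<longlongrightarrow> w0) (at s)"
  shows "((\<lambda>t. U t (w t)) \<longlongrightarrow> U s w0) (at s)"
proof -
  have "((\<lambda>t. norm (U t (w t - w0))) \<longlongrightarrow> 0) (at s)"
    using tendsto_norm_zero[OF LIM_zero[OF assms]] by (simp only: norm_U)
  then have "((\<lambda>t. U t (w t - w0)) \<longlongrightarrow> 0) (at s)"
    by (rule tendsto_norm_zero_cancel)
  from tendsto_add[OF this LIM_zero[OF U_continuous[of w0 s]]]
  have "((\<lambda>t. U t (w t) - U s w0) \<longlongrightarrow> 0) (at s)" by (simp add: U_diff)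
  then show ?thesis by (rule LIM_zero_cancel)
qed

lemma tendsto_U_minus: "((\<lambda>t. U (- t) x) \<longlongrightarrow> U (- s) x) (at s)"
proof -
  have "isCont (\<lambda>t. U t x) (- s)" using U_continuous[of x "- s"] by (simp add: isCont_def)
  then have "isCont (\<lambda>t. U (- t) x) s"
    using isCont_o2[where f = uminus and g = "\<lambda>t. U t x"] by auto
  then show ?thesis by (simp add: isCont_def)
qed

lemma U_quotient_tendsto:
  assumes "x \<in> D"
  shows "((\<lambda>k. (U k (U t x) - U t x) /\<^sub>R k) \<longlongrightarrow> U t (iA x)) (at 0)"
proof -
  have "((\<lambda>k. U t ((U k x - x) /\<^sub>R k)) \<longlongrightarrow> U t (iA x)) (at 0)"
    using bounded_linear.tendsto[OF bounded_linear_U generator[OF assms]] .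
  then show ?thesis by (simp add: U_U U_diff U_scaleR add.commute)
qed

lemma U_domain:
  assumes "x \<in> D"
  shows "U t x \<in> D" "iA (U t x) = U t (iA x)"
proof -
  show D: "U t x \<in> D" using domain[OF U_quotient_tendsto[OF assms]] .
  show "iA (U t x) = U t (iA x)"
    using tendsto_unique[OF _ generator[OF D] U_quotient_tendsto[OF assms]] by simp
qed

lemma U_has_vector_derivative:
  assumes "x \<in> D"
  shows "((\<lambda>t. U t x) has_vector_derivative U t (iA x)) (at t)"
  using U_quotient_tendsto[OF assms, of t]
  by (intro has_vector_derivative_if_quotient_tendsto) (simp add: U_U add.commute)

lemma U_minus_has_vector_derivative:
  assumes "x \<in> D"
  shows "((\<lambda>t. U (- t) x) has_vector_derivative - U (- t) (iA x)) (at t)"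
proof -
  have "(uminus has_vector_derivative (-1)) (at t)"
    by (auto intro!: derivative_eq_intros simp: has_real_derivative_iff_has_vector_derivative[symmetric])
  from vector_diff_chain_at[OF this U_has_vector_derivative[OF assms, of "- t"]]
  show ?thesis by (simp add: o_def)
qed

lemma domain_sequence:
  obtains zn where "\<And>n. zn n \<in> D" "\<And>n. norm (zn n - z) \<le> inverse (real (Suc n))" "zn \<longlonglongrightarrow> z"
proof -
  have "\<exists>d. d \<in> D \<and> norm (d - z) < inverse (real (Suc n))" for n
    using domain_dense[of "inverse (real (Suc n))" z] by (auto simp: norm_minus_commute)
  then obtain zn where zn: "\<And>n. zn n \<in> D" "\<And>n. norm (zn n - z) < inverse (real (Suc n))"
    by metis
  have "(\<lambda>n. zn n - z) \<longlonglongrightarrow> 0"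
    using zn(2) by (intro Lim_null_comparison[OF _ LIMSEQ_inverse_real_of_nat]) (simp add: less_imp_le)
  then show ?thesis
    using that zn less_imp_le LIM_zero_cancel by blast
qed

lemma norm_U_diff_le:
  assumes "x \<in> D"
  shows "norm (U t x - x) \<le> \<bar>t\<bar> * norm (iA x)"
proof -
  have cont: "continuous_on S (\<lambda>t. U t x)" for S
    using U_continuous by (intro continuous_at_imp_continuous_on) (auto simp: isCont_def)
  have der: "((\<lambda>\<tau>. U \<tau> x) has_derivative (\<lambda>h. h *\<^sub>R U \<tau> (iA x))) (at \<tau>)" for \<tau>
    using U_has_vector_derivative[OF assms, of \<tau>] unfolding has_vector_derivative_def .
  consider "t = 0" | "0 < t" | "t < 0" by linarith
  then show ?thesis
  proof cases
    case 2
    from mvt_general[OF 2 cont der] show ?thesis using 2 by (auto simp: U_0 norm_U)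
  next
    case 3
    from mvt_general[OF 3 cont der] show ?thesis using 3 by (auto simp: U_0 norm_U norm_minus_commute)
  qed (simp add: U_0)
qed

end

locale unitary_group_commutator = unitary_group +
  fixes W B :: "'v::real_inner \<Rightarrow> 'v" and nB :: real
  assumes bounded_linear_W: "bounded_linear W"
    and W_symmetric: "\<And>x y. inner (W x) y = inner x (W y)"
    and B_linear: "linear B"
    and norm_B_le: "\<And>x. norm (B x) \<le> nB * norm x"
    and nB_nonneg: "0 \<le> nB"
    and commutator_form: "\<And>x y. x \<in> D \<Longrightarrow> y \<in> D \<Longrightarrow> inner y (B x) = inner (W y) (iA x) + inner (iA y) (W x)"
begin

lemma bounded_linear_B: "bounded_linear B"
  using B_linear norm_B_le
  by (auto intro!: bounded_linear_intro[where K = nB] simp: linear_add linear_scale mult.commute)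

lemma B_diff: "B (x - y) = B x - B y"
  using B_linear linear_diff by blast

definition conjW :: "'v \<Rightarrow> real \<Rightarrow> 'v" where "conjW x t = U t (W (U (- t) x))"
definition conjB :: "'v \<Rightarrow> real \<Rightarrow> 'v" where "conjB x t = U t (B (U (- t) x))"

lemma norm_conjB_le: "norm (conjB x t) \<le> nB * norm x"
  unfolding conjB_def using norm_B_le[of "U (- t) x"] by (simp add: norm_U)

lemma conjB_diff: "conjB x t - conjB y t = conjB (x - y) t"
  unfolding conjB_def by (simp add: U_diff B_diff)

lemma tendsto_conjB: "((\<lambda>t. conjB x t) \<longlongrightarrow> conjB x s) (at s)"
  unfolding conjB_def
  by (intro tendsto_U_comp bounded_linear.tendsto[OF bounded_linear_B] tendsto_U_minus)

lemma bounded_linear_conjW: "bounded_linear (\<lambda>x. conjW x t)"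
  unfolding conjW_def
  using bounded_linear_compose[OF bounded_linear_U bounded_linear_compose[OF bounded_linear_W bounded_linear_U]]
  by (simp add: o_def)

lemma inner_conjW_has_derivative_domain:
  assumes x: "x \<in> D" and y: "y \<in> D"
  shows "((\<lambda>t. inner y (conjW x t)) has_real_derivative - inner y (conjB x t)) (at t)"
proof -
  have bb: "bounded_bilinear (\<lambda>a b. inner a (W b))"
    using bounded_bilinear.comp[OF bounded_bilinear_inner bounded_linear_ident bounded_linear_W] by simp
  have eq: "(\<lambda>t. inner y (conjW x t)) = (\<lambda>t. inner (U (- t) y) (W (U (- t) x)))"
    by (rule ext) (simp add: conjW_def inner_commute[of y] inner_U_left)
  have "((\<lambda>t. inner (U (- t) y) (W (U (- t) x))) has_vector_derivative
      (inner (U (- t) y) (W (- U (- t) (iA x))) + inner (- U (- t) (iA y)) (W (U (- t) x)))) (at t)"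
    using bounded_bilinear.has_vector_derivative[OF bb U_minus_has_vector_derivative[OF y]
        U_minus_has_vector_derivative[OF x]] .
  moreover have "inner (U (- t) y) (W (- U (- t) (iA x))) + inner (- U (- t) (iA y)) (W (U (- t) x))
      = - inner (U (- t) y) (B (U (- t) x))"
    using commutator_form[OF U_domain(1)[OF x] U_domain(1)[OF y], of "- t" "- t"]
    by (simp add: U_domain x y linear_neg[OF bounded_linear.linear[OF bounded_linear_W]] W_symmetric)
  moreover have "inner (U (- t) y) (B (U (- t) x)) = inner y (conjB x t)"
    by (simp add: conjB_def inner_commute[of y] inner_U_left)
  ultimately show ?thesis
    unfolding eq has_real_derivative_iff_has_vector_derivative by simp
qed

lemma inner_conjB_perturb_le:
  assumes x: "norm (x' - x) \<le> d" and y: "norm (y' - y) \<le> d" and d: "d \<le> 1"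
  shows "\<bar>inner y' (conjB x' t) - inner y (conjB x t)\<bar> \<le> nB * (norm x + 1 + norm y) * d"
proof -
  have "norm x' \<le> norm x + 1"
    using norm_triangle_ineq[of "x' - x" x] x d by simp
  then have "norm (conjB x' t) \<le> nB * (norm x + 1)"
    using norm_conjB_le[of x' t] mult_left_mono[OF _ nB_nonneg] by (meson order.trans)
  moreover have "norm (conjB (x' - x) t) \<le> nB * d"
    using norm_conjB_le[of "x' - x" t] mult_left_mono[OF x nB_nonneg] by linarith
  moreover have "inner y' (conjB x' t) - inner y (conjB x t) = inner (y' - y) (conjB x' t) + inner y (conjB (x' - x) t)"
    by (simp add: inner_diff_left conjB_diff[symmetric] inner_diff_right)
  ultimately have "\<bar>inner y' (conjB x' t) - inner y (conjB x t)\<bar> \<le> d * (nB * (norm x + 1)) + norm y * (nB * d)"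
    using y Cauchy_Schwarz_ineq2[of "y' - y" "conjB x' t"] Cauchy_Schwarz_ineq2[of y "conjB (x' - x) t"]
    by (smt (verit, best) mult_left_mono mult_mono norm_ge_zero)
  then show ?thesis by (simp add: algebra_simps)
qed

text \<open>Weak differentiability extends from \<open>D\<close> to the whole space because the derivatives
  \<open>- inner y (conjB x t)\<close> of the approximating functions converge uniformly in \<open>t\<close>.\<close>

lemma inner_conjW_has_derivative:
  "((\<lambda>t. inner y (conjW x t)) has_real_derivative - inner y (conjB x t)) (at t)"
proof -
  obtain xn where xn: "\<And>n. xn n \<in> D" "\<And>n. norm (xn n - x) \<le> inverse (real (Suc n))" "xn \<longlonglongrightarrow> x"
    using domain_sequence[where z = x] by blast
  obtain yn where yn: "\<And>n. yn n \<in> D" "\<And>n. norm (yn n - y) \<le> inverse (real (Suc n))" "yn \<longlonglongrightarrow> y"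
    using domain_sequence[where z = y] by blast
  define M where "M = nB * (norm x + 1 + norm y)"
  have uniform: "\<forall>\<^sub>F n in sequentially. \<forall>t\<in>UNIV. \<forall>h.
      norm (- inner (yn n) (conjB (xn n) t) * h - - inner y (conjB x t) * h) \<le> e * norm h"
    if "e > 0" for e
  proof -
    have "(\<lambda>n. M * inverse (real (Suc n))) \<longlonglongrightarrow> M * 0"
      by (intro tendsto_mult tendsto_const LIMSEQ_inverse_real_of_nat)
    then have "\<forall>\<^sub>F n in sequentially. M * inverse (real (Suc n)) < e"
      using order_tendstoD(2)[of _ 0 sequentially e] that by simp
    then show ?thesis
    proof (rule eventually_mono)
      fix n assume n: "M * inverse (real (Suc n)) < e"
      show "\<forall>t\<in>UNIV. \<forall>h. norm (- inner (yn n) (conjB (xn n) t) * h - - inner y (conjB x t) * h) \<le> e * norm h"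
      proof (intro ballI allI)
        fix t h :: real
        have "inverse (real (Suc n)) \<le> 1" by (simp add: inverse_le_1_iff)
        from inner_conjB_perturb_le[OF xn(2)[of n] yn(2)[of n] this, of t]
        have "\<bar>inner (yn n) (conjB (xn n) t) - inner y (conjB x t)\<bar> \<le> e"
          using n by (simp add: M_def)
        then show "norm (- inner (yn n) (conjB (xn n) t) * h - - inner y (conjB x t) * h) \<le> e * norm h"
          by (simp add: abs_mult left_diff_distrib[symmetric] abs_minus_commute mult_right_mono)
      qed
    qed
  qed
  have conv: "(\<lambda>n. inner (yn n) (conjW (xn n) t)) \<longlonglongrightarrow> inner y (conjW x t)" for t
    by (intro tendsto_inner yn(3) bounded_linear.tendsto[OF bounded_linear_conjW] xn(3))
  have "((\<lambda>t. inner (yn n) (conjW (xn n) t)) has_derivative (\<lambda>h. - inner (yn n) (conjB (xn n) t) * h)) (at t within UNIV)" for n t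
    using inner_conjW_has_derivative_domain[OF xn(1)[of n] yn(1)[of n], of t]
    unfolding has_field_derivative_def .
  from has_derivative_sequence[OF convex_UNIV this uniform UNIV_I conv]
  obtain g where g: "\<And>t. (\<lambda>n. inner (yn n) (conjW (xn n) t)) \<longlonglongrightarrow> g t"
    "\<And>t. (g has_derivative (*) (- inner y (conjB x t))) (at t)"
    by blast
  have "g = (\<lambda>t. inner y (conjW x t))"
    using LIMSEQ_unique[OF g(1) conv] by auto
  then show ?thesis
    using g(2)[of t] unfolding has_field_derivative_def by simp
qed

text \<open>Mean value theorem for \<open>t \<mapsto> \<langle>v, conjW x t + t conjB x s\<rangle>\<close>, with \<open>v\<close> the error of the
  difference quotient, turns the weak derivative into a strong one.\<close>

lemma conjW_quotient_tendsto: "((\<lambda>h. (conjW x (s + h) - conjW x s) /\<^sub>R h) \<longlongrightarrow> - conjB x s) (at 0)"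
  unfolding LIM_eq
proof (intro allI impI)
  fix r :: real assume r: "r > 0"
  from tendsto_conjB[of x s, unfolded LIM_eq] r obtain \<delta> where \<delta>: "\<delta> > 0"
    "\<And>\<xi>. \<xi> \<noteq> s \<and> norm (\<xi> - s) < \<delta> \<Longrightarrow> norm (conjB x \<xi> - conjB x s) < r" by blast
  show "\<exists>\<delta>>0. \<forall>h. h \<noteq> 0 \<and> norm (h - 0) < \<delta> \<longrightarrow> norm ((conjW x (s + h) - conjW x s) /\<^sub>R h - - conjB x s) < r"
  proof (intro exI[of _ \<delta>] conjI allI impI)
    show "\<delta> > 0" by fact
    fix h :: real assume h: "h \<noteq> 0 \<and> norm (h - 0) < \<delta>"
    define v where "v = (conjW x (s + h) - conjW x s) /\<^sub>R h + conjB x s"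
    define \<phi> where "\<phi> t = inner v (conjW x t) + t * inner v (conjB x s)" for t
    have "(\<phi> has_real_derivative (inner v (conjB x s) - inner v (conjB x t))) (at t)" for t
      unfolding \<phi>_def by (auto intro!: derivative_eq_intros inner_conjW_has_derivative)
    from MVT_between[OF this, of s "s + h"] obtain \<xi> where \<xi>: "min s (s + h) \<le> \<xi>" "\<xi> \<le> max s (s + h)"
      "\<phi> (s + h) - \<phi> s = h * (inner v (conjB x s) - inner v (conjB x \<xi>))"
      by auto
    have "\<phi> (s + h) - \<phi> s = inner v (h *\<^sub>R v)"
      using h by (simp add: \<phi>_def v_def inner_diff_right inner_add_right algebra_simps)
    then have "inner v v = inner v (conjB x s - conjB x \<xi>)"
      using \<xi>(3) h by (simp add: inner_diff_right)
    then have "norm v \<le> norm (conjB x \<xi> - conjB x s)"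
      by (intro norm_le_if_inner_self_le)
        (simp_all add: Cauchy_Schwarz_ineq2[THEN abs_le_D1, THEN order.trans] norm_minus_commute)
    also have "\<dots> < r"
    proof (cases "\<xi> = s")
      case False
      have "norm (\<xi> - s) \<le> norm h" using \<xi>(1,2) by (auto simp: min_def max_def split: if_splits)
      then show ?thesis using \<delta>(2)[of \<xi>] False h by simp
    qed (use r in simp)
    finally show "norm ((conjW x (s + h) - conjW x s) /\<^sub>R h - - conjB x s) < r"
      by (simp add: v_def)
  qed
qed

end
context unitary_group_commutator
begin

definition regularizing_projection :: "('v \<Rightarrow> 'v) \<Rightarrow> real \<Rightarrow> real \<Rightarrow> bool" where
  "regularizing_projection P a b \<longleftrightarrow>
     (\<forall>z. P z \<in> D \<and> norm (iA (P z)) \<le> a * norm z) \<and> (\<forall>z. P (P z) = P z)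
     \<and> (\<forall>x y. inner (P x) y = inner x (P y)) \<and> (\<forall>x y. P (x - y) = P x - P y)
     \<and> (\<forall>z. norm (B z - P (B z)) \<le> b * norm z) \<and> (\<forall>z. norm (B (z - P z)) \<le> b * norm z)"

lemma norm_projection_U_diff_le:
  assumes P: "regularizing_projection P a b" and a: "0 \<le> a"
  shows "norm (U t (P z) - P z) \<le> \<bar>t\<bar> * a * norm z"
    and "norm (P (U t z - z)) \<le> \<bar>t\<bar> * a * norm z"
proof -
  have PD: "P z \<in> D" "norm (iA (P z)) \<le> a * norm z" and PP: "P (P z) = P z"
    and Psym: "inner (P x) y = inner x (P y)" for x y z
    using P unfolding regularizing_projection_def by blast+
  show UP: "norm (U t (P z) - P z) \<le> \<bar>t\<bar> * a * norm z" for t z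
    using order.trans[OF norm_U_diff_le[OF PD(1)[of z]] mult_left_mono[OF PD(2)[of z] abs_ge_zero]]
    by (simp add: mult.assoc)
  text \<open>\<open>P (U t - 1)\<close> is the adjoint of \<open>(U (-t) - 1) P\<close>.\<close>
  define v where "v = P (U t z - z)"
  have "inner v v = inner (U t z - z) (P (P (U t z - z)))"
    unfolding v_def by (rule Psym)
  also have "\<dots> = inner v (U t z - z)"
    by (simp add: v_def PP inner_commute)
  also have "\<dots> = inner (U (- t) v - v) z"
    using inner_U_left[of t z v] by (simp add: inner_diff_left inner_diff_right inner_commute)
  also have "\<dots> \<le> norm (U (- t) v - v) * norm z"
    using Cauchy_Schwarz_ineq2 abs_le_D1 by blast
  also have "\<dots> \<le> (\<bar>t\<bar> * a * norm v) * norm z"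
    using UP[of "- t" v] by (simp add: v_def PP mult_right_mono)
  finally have "inner v v \<le> norm v * (\<bar>t\<bar> * a * norm z)"
    by (simp add: algebra_simps)
  then show "norm (P (U t z - z)) \<le> \<bar>t\<bar> * a * norm z"
    unfolding v_def using a by (intro norm_le_if_inner_self_le) auto
qed

lemma norm_conjB_diff_le_projection:
  assumes P: "regularizing_projection P a b" and a: "0 \<le> a" and b: "0 \<le> b"
  shows "norm (conjB w t - B w) \<le> (2 * nB * a * \<bar>t\<bar> + 4 * b) * norm w"
proof -
  have Pdiff: "P (x - y) = P x - P y" and PB1: "norm (B z - P (B z)) \<le> b * norm z"
    and PB2: "norm (B (z - P z)) \<le> b * norm z" for x y z
    using P unfolding regularizing_projection_def by blast+
  define y where "y = U (- t) w"
  define q where "q = B y - P (B y)"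
  have ny: "norm y = norm w" by (simp add: y_def norm_U)
  have "norm (U t (P (B y)) - P (B y)) \<le> \<bar>t\<bar> * a * (nB * norm w)"
    using norm_projection_U_diff_le(1)[OF P a, of t "B y"] norm_B_le[of y] ny a
    by (smt (verit) mult_left_mono mult_nonneg_nonneg abs_ge_zero)
  moreover have "norm (U t q - q) \<le> 2 * (b * norm w)"
    using norm_triangle_ineq4[of "U t q" q] PB1[of y] by (simp add: q_def norm_U ny)
  moreover have "norm (B (P (y - w))) \<le> nB * (\<bar>t\<bar> * a * norm w)"
    using norm_projection_U_diff_le(2)[OF P a, of "- t" w] norm_B_le[of "P (y - w)"] nB_nonneg
    by (smt (verit) abs_minus_cancel mult_left_mono y_def)
  moreover have "norm (B ((y - w) - P (y - w))) \<le> b * (2 * norm w)"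
    using PB2[of "y - w"] norm_triangle_ineq4[of y w] ny b by (smt (verit) mult_left_mono)
  moreover have "conjB w t - B w = ((U t (P (B y)) - P (B y)) + (U t q - q))
      + (B (P (y - w)) + B ((y - w) - P (y - w)))"
    by (simp add: conjB_def y_def q_def U_diff B_diff)
  ultimately have "norm (conjB w t - B w) \<le> (\<bar>t\<bar> * a * (nB * norm w) + 2 * (b * norm w))
      + (nB * (\<bar>t\<bar> * a * norm w) + b * (2 * norm w))"
    by (smt (verit) norm_triangle_ineq)
  then show ?thesis by (simp add: algebra_simps)
qed

lemma norm_conjB_sub_le: "norm (conjB w t - B w) \<le> 2 * nB * norm w"
  using norm_triangle_ineq4[of "conjB w t" "B w"] norm_conjB_le[of w t] norm_B_le[of w] by linarith

lemma conjB_holder: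
  fixes ca cb \<epsilon> :: real
  assumes \<epsilon>: "\<epsilon> > 0" and ca: "ca \<ge> 0" and cb: "cb \<ge> 0"
    and projections: "\<And>R. R \<ge> 1 \<Longrightarrow> \<exists>P. regularizing_projection P (cb * R) (ca * R powr - \<epsilon>)"
  shows "\<exists>c\<ge>0. \<forall>t w. norm (conjB w t - B w) \<le> c * \<bar>t\<bar> powr (\<epsilon> / (1 + \<epsilon>)) * norm w"
proof -
  define \<delta> where "\<delta> = \<epsilon> / (1 + \<epsilon>)"
  define c where "c = 2 * nB * cb + 4 * ca + 2 * nB"
  have c: "c \<ge> 0" using ca cb nB_nonneg by (simp add: c_def)
  have "norm (conjB w t - B w) \<le> c * \<bar>t\<bar> powr \<delta> * norm w" for t w
  proof (cases "\<bar>t\<bar> \<le> 1")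
    case True
    show ?thesis
    proof (cases "t = 0")
      case False
      text \<open>\<open>R\<close> balances the two terms \<open>\<bar>t\<bar> R\<close> and \<open>R\<^sup>-\<^sup>\<epsilon>\<close> of the previous bound.\<close>
      define R where "R = \<bar>t\<bar> powr (- 1 / (1 + \<epsilon>))"
      have R: "R \<ge> 1" and tR: "\<bar>t\<bar> * R = \<bar>t\<bar> powr \<delta>" and Reps: "R powr - \<epsilon> = \<bar>t\<bar> powr \<delta>"
        using powr_balance[of "\<bar>t\<bar>" \<epsilon>] False True \<epsilon> by (simp_all add: R_def \<delta>_def)
      obtain P where P: "regularizing_projection P (cb * R) (ca * R powr - \<epsilon>)"
        using projections[OF R] by blast
      have "norm (conjB w t - B w) \<le> (2 * nB * cb * (\<bar>t\<bar> * R) + 4 * ca * R powr - \<epsilon>) * norm w"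
        using norm_conjB_diff_le_projection[OF P] cb ca R by (simp add: algebra_simps)
      also have "\<dots> = (2 * nB * cb + 4 * ca) * \<bar>t\<bar> powr \<delta> * norm w"
        unfolding tR Reps by (simp add: algebra_simps)
      also have "\<dots> \<le> c * \<bar>t\<bar> powr \<delta> * norm w"
        using nB_nonneg by (intro mult_right_mono) (auto simp: c_def)
      finally show ?thesis .
    qed (simp add: conjB_def U_0)
  next
    case False
    have "1 \<le> \<bar>t\<bar> powr \<delta>" using False \<epsilon> by (intro ge_one_powr_ge_zero) (auto simp: \<delta>_def)
    moreover have "2 * nB \<le> c" using ca cb nB_nonneg by (simp add: c_def)
    ultimately have "2 * nB * norm w \<le> c * \<bar>t\<bar> powr \<delta> * norm w"
      using c by (intro mult_right_mono) (auto intro: order.trans[OF _ mult_left_mono, of _ c 1])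
    then show ?thesis
      using norm_conjB_sub_le[of w t] by linarith
  qed
  then show ?thesis using c unfolding \<delta>_def by blast
qed

lemma norm_conjB_reflect_le:
  assumes holder: "\<And>t w. norm (conjB w t - B w) \<le> c * \<bar>t\<bar> powr \<delta> * norm w"
  shows "norm (conjB x \<xi> - conjB x (- \<xi>)) \<le> c * \<bar>2 * \<xi>\<bar> powr \<delta> * norm x"
proof -
  define w where "w = U \<xi> x"
  have "conjB x \<xi> - conjB x (- \<xi>) = U (- \<xi>) (conjB w (2 * \<xi>) - B w)"
    by (simp add: conjB_def w_def U_diff U_U)
  then have "norm (conjB x \<xi> - conjB x (- \<xi>)) = norm (conjB w (2 * \<xi>) - B w)"
    by (simp add: norm_U)
  also have "\<dots> \<le> c * \<bar>2 * \<xi>\<bar> powr \<delta> * norm x"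
    using holder[of w "2 * \<xi>"] by (simp add: w_def norm_U)
  finally show ?thesis .
qed

text \<open>Mean value theorem for \<open>t \<mapsto> \<langle>v, conjW x t + conjW x (-t)\<rangle>\<close>, with \<open>v\<close> the second difference.\<close>

lemma norm_conjW_second_diff_le:
  assumes c: "c \<ge> 0" and \<delta>: "\<delta> > 0" and s: "s \<ge> 0"
    and holder: "\<And>t w. norm (conjB w t - B w) \<le> c * \<bar>t\<bar> powr \<delta> * norm w"
  shows "norm (conjW x s + conjW x (- s) - 2 *\<^sub>R W x) \<le> s * (c * (2 * s) powr \<delta>) * norm x"
proof -
  define v where "v = conjW x s + conjW x (- s) - 2 *\<^sub>R W x"
  define \<phi> where "\<phi> t = inner v (conjW x t) + inner v (conjW x (- t))" for t
  have "(\<phi> has_real_derivative (inner v (conjB x (- t)) - inner v (conjB x t))) (at t)" for t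
    unfolding \<phi>_def
    by (auto intro!: derivative_eq_intros inner_conjW_has_derivative DERIV_chain2[OF inner_conjW_has_derivative])
  from MVT_between[OF this, of 0 s] obtain \<xi> where \<xi>: "0 \<le> \<xi>" "\<xi> \<le> s"
    "\<phi> s - \<phi> 0 = s * (inner v (conjB x (- \<xi>)) - inner v (conjB x \<xi>))"
    using s by auto
  have "c * \<bar>2 * \<xi>\<bar> powr \<delta> \<le> c * (2 * s) powr \<delta>"
    using \<xi>(1,2) c \<delta> by (intro mult_left_mono powr_mono2) auto
  then have K: "norm (conjB x \<xi> - conjB x (- \<xi>)) \<le> c * (2 * s) powr \<delta> * norm x"
    using norm_conjB_reflect_le[OF holder, of x \<xi>] by (meson mult_right_mono norm_ge_zero order.trans)
  have "\<phi> s - \<phi> 0 = inner v v"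
    by (simp add: \<phi>_def v_def conjW_def U_0 inner_diff_right inner_add_right)
  then have "inner v v = inner v (s *\<^sub>R (conjB x (- \<xi>) - conjB x \<xi>))"
    using \<xi>(3) by (simp add: inner_diff_right)
  also have "\<dots> \<le> norm v * (s * norm (conjB x \<xi> - conjB x (- \<xi>)))"
    using mult_left_mono[OF Cauchy_Schwarz_ineq2[THEN abs_le_D1, of v "conjB x (- \<xi>) - conjB x \<xi>"] s]
    by (simp add: norm_minus_commute algebra_simps)
  also have "\<dots> \<le> norm v * (s * (c * (2 * s) powr \<delta> * norm x))"
    using K s by (intro mult_left_mono) auto
  finally show ?thesis
    unfolding v_def[symmetric] using s c by (intro norm_le_if_inner_self_le) (auto simp: mult.assoc)
qed

end
section \<open>Weighted shifts on \<open>\<nat>\<^sup>d\<close>\<close>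

abbreviation incr_at :: "('d \<Rightarrow> nat) \<Rightarrow> 'd \<Rightarrow> 'd \<Rightarrow> nat" where
  "incr_at n j \<equiv> n(j := n j + 1)"

abbreviation decr_at :: "('d \<Rightarrow> nat) \<Rightarrow> 'd \<Rightarrow> 'd \<Rightarrow> nat" where
  "decr_at n j \<equiv> n(j := n j - 1)"

text \<open>\<open>wshift j c\<close> is \<open>c U\<^sub>j\<^sub>,\<^sub>+\<close> and \<open>wshift_adj j c\<close> is \<open>c U\<^sub>j\<^sub>,\<^sub>+\<^sup>*\<close>, with \<open>c\<close> acting by multiplication.\<close>

definition wshift :: "'d \<Rightarrow> (('d \<Rightarrow> nat) \<Rightarrow> complex) \<Rightarrow> 'd seq \<Rightarrow> 'd seq" where
  "wshift j c f = (\<lambda>n. if 1 \<le> n j then c n * f (decr_at n j) else 0)"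

definition wshift_adj :: "'d \<Rightarrow> (('d \<Rightarrow> nat) \<Rightarrow> complex) \<Rightarrow> 'd seq \<Rightarrow> 'd seq" where
  "wshift_adj j c f = (\<lambda>n. c n * f (incr_at n j))"

lemma inj_incr_at: "inj (\<lambda>m. incr_at m j)"
  by (rule injI) (metis fun_upd_apply fun_upd_triv fun_upd_upd add_right_cancel)

lemma incr_at_decr_at: "1 \<le> n j \<Longrightarrow> incr_at (decr_at n j) j = n"
  by (auto simp: fun_eq_iff)

lemma range_incr_at:
  fixes j :: 'd
  shows "range (\<lambda>m::'d \<Rightarrow> nat. incr_at m j) = {n. 1 \<le> n j}"
proof (intro set_eqI iffI)
  fix n :: "'d \<Rightarrow> nat" assume "n \<in> {n. 1 \<le> n j}"
  then have "n = incr_at (decr_at n j) j" by (simp add: incr_at_decr_at)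
  then show "n \<in> range (\<lambda>m. incr_at m j)" by blast
qed auto

lemma has_sum_reindex_incr_at:
  fixes S :: "('d \<Rightarrow> nat) \<Rightarrow> real"
  assumes "\<And>n. n j = 0 \<Longrightarrow> S n = 0"
  shows "(S has_sum x) UNIV \<longleftrightarrow> ((\<lambda>m. S (incr_at m j)) has_sum x) UNIV"
proof -
  have "(S has_sum x) UNIV \<longleftrightarrow> (S has_sum x) (range (\<lambda>m. incr_at m j))"
    using assms by (intro has_sum_cong_neutral) (auto simp: range_incr_at[simplified])
  also have "\<dots> \<longleftrightarrow> ((\<lambda>m. S (incr_at m j)) has_sum x) UNIV"
    using has_sum_reindex[OF inj_incr_at[of j], where g = S] by (simp add: o_def)
  finally show ?thesis .
qed

lemma wshift_bounded:
  assumes f: "f \<in> l2" and c: "\<And>n. 1 \<le> n j \<Longrightarrow> cmod (c n) \<le> M" and M: "0 \<le> M"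
  shows "wshift j c f \<in> l2" "l2norm (wshift j c f) \<le> M * l2norm f"
proof -
  define S where "S n = (cmod (wshift j c f n))^2" for n
  define T where "T m = (cmod (c (incr_at m j)))^2 * (cmod (f m))^2" for m
  have fs: "(\<lambda>m. (cmod (f m))^2) summable_on UNIV" using f by (simp add: l2_def)
  have TM: "T m \<le> M^2 * (cmod (f m))^2" for m
    unfolding T_def using c[of "incr_at m j"] by (simp add: mult_right_mono power_mono)
  have Ts: "T summable_on UNIV"
    by (rule summable_on_comparison_test[OF summable_on_cmult_right[OF fs, of "M^2"]]) (rule TM, simp add: T_def)
  have "(\<lambda>m. S (incr_at m j)) = T"
    by (auto simp: S_def T_def wshift_def fun_eq_iff norm_mult power_mult_distrib)
  then have "(S has_sum infsum T UNIV) UNIV"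
    using has_sum_reindex_incr_at[of j S] Ts by (simp add: S_def wshift_def)
  then have Ss: "S summable_on UNIV" and Si: "infsum S UNIV = infsum T UNIV"
    by (auto simp: has_sum_iff)
  show "wshift j c f \<in> l2" using Ss by (simp add: l2_def S_def[abs_def])
  have "infsum T UNIV \<le> M^2 * infsum (\<lambda>m. (cmod (f m))^2) UNIV"
    using infsum_mono[OF Ts summable_on_cmult_right[OF fs] TM] by (simp add: infsum_cmult_right')
  then show "l2norm (wshift j c f) \<le> M * l2norm f"
    using Si M by (intro l2norm_le_sqrt_bound) (simp_all add: S_def[abs_def])
qed

lemma wshift_adj_bounded:
  assumes f: "f \<in> l2" and c: "\<And>n. cmod (c n) \<le> M" and M: "0 \<le> M"
  shows "wshift_adj j c f \<in> l2" "l2norm (wshift_adj j c f) \<le> M * l2norm f"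
proof -
  define F where "F n = (cmod (f n))^2" for n
  have fs: "F summable_on UNIV" using f by (simp add: l2_def F_def[abs_def])
  have fr: "F summable_on range (\<lambda>m. incr_at m j)"
    using summable_on_subset_banach[OF fs] by simp
  have Fu: "(\<lambda>m. F (incr_at m j)) summable_on UNIV"
    using fr summable_on_reindex[OF inj_incr_at[of j], where g = F] by (simp add: o_def)
  have "infsum (\<lambda>m. F (incr_at m j)) UNIV = infsum F (range (\<lambda>m. incr_at m j))"
    using infsum_reindex[OF inj_incr_at[of j], where g = F] by (simp add: o_def)
  also have "\<dots> \<le> infsum F UNIV"
    by (rule infsum_mono2[OF fr fs]) (auto simp: F_def)
  finally have Fui: "infsum (\<lambda>m. F (incr_at m j)) UNIV \<le> infsum F UNIV" .
  define S where "S n = (cmod (wshift_adj j c f n))^2" for n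
  have SM: "S n \<le> M^2 * F (incr_at n j)" for n
    unfolding S_def wshift_adj_def F_def norm_mult power_mult_distrib
    using c[of n] by (simp add: mult_right_mono power_mono)
  have Ss: "S summable_on UNIV"
    by (rule summable_on_comparison_test[OF summable_on_cmult_right[OF Fu, of "M^2"]]) (rule SM, simp add: S_def)
  show "wshift_adj j c f \<in> l2" using Ss by (simp add: l2_def S_def[abs_def])
  have "infsum S UNIV \<le> M^2 * infsum (\<lambda>n. F (incr_at n j)) UNIV"
    using infsum_mono[OF Ss summable_on_cmult_right[OF Fu] SM] by (simp add: infsum_cmult_right')
  also have "\<dots> \<le> M^2 * infsum F UNIV" using Fui by (simp add: mult_left_mono)
  finally show "l2norm (wshift_adj j c f) \<le> M * l2norm f"
    using M by (intro l2norm_le_sqrt_bound) (simp_all add: S_def[abs_def] F_def[abs_def])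
qed

lemma l2inner_wshift: "l2inner f (wshift j c g) = l2inner (wshift_adj j (\<lambda>m. cnj (c (incr_at m j))) f) g"
proof -
  have "l2inner f (wshift j c g) = infsum (\<lambda>n. cnj (f n) * wshift j c g n) (range (\<lambda>m. incr_at m j))"
    unfolding l2inner_def by (rule infsum_cong_neutral) (auto simp: wshift_def range_incr_at[simplified])
  also have "\<dots> = infsum (\<lambda>m. cnj (f (incr_at m j)) * wshift j c g (incr_at m j)) UNIV"
    using infsum_reindex[OF inj_incr_at[of j], where g = "\<lambda>n. cnj (f n) * wshift j c g n"]
    by (simp add: o_def)
  also have "\<dots> = l2inner (wshift_adj j (\<lambda>m. cnj (c (incr_at m j))) f) g"
    unfolding l2inner_def by (rule infsum_cong) (simp add: wshift_def wshift_adj_def)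
  finally show ?thesis .
qed

lemma l2inner_wshift_adj: "l2inner f (wshift_adj j c g) = l2inner (wshift j (\<lambda>n. cnj (c (decr_at n j))) f) g"
proof -
  have "l2inner g (wshift j (\<lambda>n. cnj (c (decr_at n j))) f) = l2inner (wshift_adj j c g) f"
    unfolding l2inner_wshift by simp
  then show ?thesis by (metis l2inner_commute)
qed

lemma wshift_cong: "(\<And>n. 1 \<le> n j \<Longrightarrow> c n = c' n) \<Longrightarrow> wshift j c f = wshift j c' f"
  by (auto simp: wshift_def fun_eq_iff)

lemma fin_supp_wshift: "fin_supp f \<Longrightarrow> fin_supp (wshift j c f)"
  unfolding fin_supp_def
  by (rule finite_subset[of _ "(\<lambda>m. incr_at m j) ` {n. f n \<noteq> 0}"])
    (auto simp: wshift_def image_iff intro!: exI[of _ "decr_at _ j"] incr_at_decr_at[symmetric] split: if_splits)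

lemma fin_supp_wshift_adj: "fin_supp f \<Longrightarrow> fin_supp (wshift_adj j c f)"
  unfolding fin_supp_def
  by (rule finite_subset[of _ "(\<lambda>m. decr_at m j) ` {n. f n \<noteq> 0}"])
    (auto simp: wshift_adj_def image_iff intro!: exI[of _ "incr_at _ j"])

lemma wshift_sum_bounded:
  fixes a b :: "'d \<Rightarrow> ('d::finite \<Rightarrow> nat) \<Rightarrow> complex"
  assumes f: "f \<in> l2" and a: "\<And>j n. 1 \<le> n j \<Longrightarrow> cmod (a j n) \<le> M"
    and b: "\<And>j n. cmod (b j n) \<le> M" and M: "0 \<le> M"
  shows "(\<lambda>n. \<Sum>j\<in>UNIV. wshift j (a j) f n + wshift_adj j (b j) f n) \<in> l2"
    "l2norm (\<lambda>n. \<Sum>j\<in>UNIV. wshift j (a j) f n + wshift_adj j (b j) f n) \<le> 2 * real CARD('d) * M * l2norm f"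
proof -
  note ml = wshift_bounded[OF f a M] and pl = wshift_adj_bounded[OF f b M]
  define X where "X = (\<Sum>j\<in>UNIV. Abs_l2vec (wshift j (a j) f) + Abs_l2vec (wshift_adj j (b j) f))"
  have eq: "(\<lambda>n. \<Sum>j\<in>UNIV. wshift j (a j) f n + wshift_adj j (b j) f n) = Rep_l2vec X"
    unfolding X_def by (simp add: Rep_l2vec_sum Rep_l2vec_plus Abs_l2vec_inverse ml pl)
  show "(\<lambda>n. \<Sum>j\<in>UNIV. wshift j (a j) f n + wshift_adj j (b j) f n) \<in> l2"
    unfolding eq by (rule Rep_l2vec)
  have "norm X \<le> (\<Sum>j\<in>UNIV. norm (Abs_l2vec (wshift j (a j) f)) + norm (Abs_l2vec (wshift_adj j (b j) f)))"
    unfolding X_def by (rule order.trans[OF norm_sum sum_mono[OF norm_triangle_ineq]])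
  also have "\<dots> \<le> (\<Sum>j\<in>(UNIV::'d set). M * l2norm f + M * l2norm f)"
    by (intro sum_mono add_mono) (simp_all add: l2norm_Abs_l2vec[symmetric] ml pl)
  finally show "l2norm (\<lambda>n. \<Sum>j\<in>UNIV. wshift j (a j) f n + wshift_adj j (b j) f n) \<le> 2 * real CARD('d) * M * l2norm f"
    unfolding eq by (simp add: norm_l2vec_eq)
qed

section \<open>The weight \<open>\<Lambda>\<close> and the cut-off to \<open>{\<Lambda> \<le> R}\<close>\<close>

lemma one_le_jbr: "1 \<le> jbr x"
  by (simp add: jbr_def)

lemma abs_le_jbr: "\<bar>x\<bar> \<le> jbr x"
  unfolding jbr_def by (simp add: real_le_rsqrt)

lemma jbr_pos: "0 < jbr x"
  using one_le_jbr[of x] by simp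

lemma jbr_add_one_le:
  assumes x: "0 \<le> x"
  shows "jbr (x + 1) \<le> jbr x + 1"
proof (rule power2_le_imp_le)
  have "(jbr (x + 1))^2 = 1 + x^2 + 2 * x + 1"
    unfolding jbr_def using x by (simp add: power2_sum)
  also have "\<dots> \<le> 1 + x^2 + 2 * jbr x + 1"
    using abs_le_jbr[of x] abs_of_nonneg[OF x] by linarith
  also have "\<dots> = (jbr x + 1)^2"
    unfolding power2_sum by (simp add: jbr_def)
  finally show "(jbr (x + 1))^2 \<le> (jbr x + 1)^2" .
  show "0 \<le> jbr x + 1"
    using one_le_jbr[of x] by linarith
qed

lemma add_half_le_jbr: "0 \<le> x \<Longrightarrow> x + 1/2 \<le> 3/2 * jbr x"
  using abs_le_jbr[of x] one_le_jbr[of x] by simp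

lemma jbr_le_Lambda: "jbr (real (n j)) \<le> Lambda n"
  unfolding Lambda_def
  by (rule member_le_sum) (auto intro: order.trans[OF zero_le_one one_le_jbr])

lemma one_le_Lambda: "1 \<le> Lambda n"
  using jbr_le_Lambda one_le_jbr order.trans by blast

lemma Lambda_pos: "0 < Lambda n"
  using one_le_Lambda[of n] by simp

lemma coordinate_le_Lambda: "real (n j) \<le> Lambda n"
  using abs_le_jbr[of "real (n j)"] jbr_le_Lambda[of n j] by simp

lemma Lambda_incr_at_le: "Lambda (incr_at n j) \<le> 2 * Lambda n"
proof -
  have split: "Lambda m = jbr (real (m j)) + (\<Sum>k\<in>UNIV - {j}. jbr (real (m k)))" for m :: "'a \<Rightarrow> nat"
    unfolding Lambda_def by (simp add: sum.remove)
  have "Lambda (incr_at n j) = jbr (real (n j) + 1) + (\<Sum>k\<in>UNIV - {j}. jbr (real (n k)))"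
    using split[of "incr_at n j"] by (simp add: add.commute)
  also have "\<dots> \<le> Lambda n + 1"
    using jbr_add_one_le[of "real (n j)"] split[of n] by simp
  also have "\<dots> \<le> 2 * Lambda n"
    using one_le_Lambda[of n] by simp
  finally show ?thesis .
qed

lemma finite_Lambda_le: "finite {n :: 'd::finite \<Rightarrow> nat. Lambda n \<le> R}"
proof (rule finite_subset)
  show "{n :: 'd \<Rightarrow> nat. Lambda n \<le> R} \<subseteq> PiE UNIV (\<lambda>_. {..nat \<lceil>R\<rceil>})"
  proof
    fix n :: "'d \<Rightarrow> nat" assume "n \<in> {n. Lambda n \<le> R}"
    then have "real (n j) \<le> real_of_int \<lceil>R\<rceil>" for j
      using coordinate_le_Lambda[of n j] le_of_int_ceiling[of R] by (simp del: le_of_int_ceiling)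
    then have "n j \<le> nat \<lceil>R\<rceil>" for j
      by (metis nat_int nat_mono of_int_le_iff of_int_of_nat_eq)
    then show "n \<in> PiE UNIV (\<lambda>_. {..nat \<lceil>R\<rceil>})" by (simp add: PiE_UNIV_domain)
  qed
qed (rule finite_PiE; simp)

definition cutoff :: "real \<Rightarrow> 'd::finite seq \<Rightarrow> 'd seq" where
  "cutoff R f = (\<lambda>n. if Lambda n \<le> R then f n else 0)"

lemma fin_supp_cutoff: "fin_supp (cutoff R f)"
  unfolding fin_supp_def cutoff_def
  by (rule finite_subset[OF _ finite_Lambda_le[of R]]) auto

lemma bounded_op_cutoff: "bounded_op (cutoff R :: 'd::finite seq \<Rightarrow> 'd seq)"
proof -
  have eq: "cutoff R f = (\<lambda>n. (if Lambda n \<le> R then 1 else 0) * f n)" for f :: "'d seq"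
    by (simp add: cutoff_def fun_eq_iff)
  have "cutoff R f \<in> l2" "l2norm (cutoff R f) \<le> 1 * l2norm f" if "f \<in> l2" for f :: "'d seq"
    unfolding eq by (intro l2_mult_bounded[where M = 1] l2norm_mult_bounded that; simp)+
  then show ?thesis
    unfolding bounded_op_def by (auto simp: cutoff_def fun_eq_iff intro!: exI[of _ 1])
qed

lemma l2norm_sub_cutoff_le:
  fixes f :: "'d::finite seq"
  assumes f: "f \<in> l2" and e: "e > 0"
  shows "\<exists>R. l2norm (\<lambda>n. f n - cutoff R f n) \<le> e"
proof -
  define F where "F n = (cmod (f n))^2" for n
  have Fs: "F summable_on UNIV" using f by (simp add: l2_def F_def[abs_def])
  obtain A where A: "finite A" "dist (sum F A) (infsum F UNIV) \<le> e^2"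
    using infsum_finite_approximation[OF Fs, of "e^2"] e by auto
  define R where "R = (\<Sum>n\<in>A. Lambda n)"
  define S where "S = {n :: 'd \<Rightarrow> nat. Lambda n \<le> R}"
  have Sf: "finite S" using finite_Lambda_le by (simp add: S_def)
  have AS: "A \<subseteq> S"
    using A(1) Lambda_pos unfolding S_def R_def by (auto intro: member_le_sum less_imp_le)
  have "infsum (\<lambda>n. (cmod (f n - cutoff R f n))^2) UNIV = infsum F (UNIV - S)"
    by (rule infsum_cong_neutral) (auto simp: cutoff_def S_def F_def)
  also have "\<dots> = infsum F UNIV - sum F S"
    using Sf by (simp add: infsum_Diff[OF Fs])
  also have "\<dots> \<le> e^2"
    using A(2) sum_mono2[OF Sf AS, of F] by (simp add: F_def dist_real_def)
  finally show ?thesis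
    unfolding l2norm_def using e by (intro exI[of _ R]) (simp add: real_sqrt_le_iff real_le_lsqrt)
qed
section \<open>The operator \<open>A\<close> and the commutator \<open>[W, iA]\<close> on finitely supported sequences\<close>

definition A_coeff_dn :: "('d \<Rightarrow> real) \<Rightarrow> 'd \<Rightarrow> ('d \<Rightarrow> nat) \<Rightarrow> complex" where
  "A_coeff_dn r j n = - (\<i> * complex_of_real (sgn (r j)) / 2) * complex_of_real (real (n j) - 1/2)"

definition A_coeff_up :: "('d \<Rightarrow> real) \<Rightarrow> 'd \<Rightarrow> ('d \<Rightarrow> nat) \<Rightarrow> complex" where
  "A_coeff_up r j n = (\<i> * complex_of_real (sgn (r j)) / 2) * complex_of_real (real (n j) + 1/2)"

lemma A0_eq_wshift:
  "A0 r f = (\<lambda>n. \<Sum>j\<in>UNIV. wshift j (A_coeff_dn r j) f n + wshift_adj j (A_coeff_up r j) f n)"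
  unfolding A0_def A_plus_def wshift_def wshift_adj_def A_coeff_dn_def A_coeff_up_def
  by (intro ext sum.cong) (simp_all add: algebra_simps)

lemma norm_i_sgn_half_le: "cmod (\<i> * complex_of_real (sgn x) / 2) \<le> 1 / 2"
  by (simp add: norm_mult norm_divide abs_sgn_eq)

lemma norm_A_coeff_dn_le: "cmod (A_coeff_dn r j n) \<le> 1/2 * \<bar>real (n j) - 1/2\<bar>"
  unfolding A_coeff_dn_def norm_mult norm_minus_cancel norm_of_real
  by (rule mult_right_mono[OF norm_i_sgn_half_le]) simp

lemma norm_A_coeff_up_le: "cmod (A_coeff_up r j n) \<le> 1/2 * \<bar>real (n j) + 1/2\<bar>"
  unfolding A_coeff_up_def norm_mult norm_of_real
  by (rule mult_right_mono[OF norm_i_sgn_half_le]) simp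

text \<open>On \<open>{\<Lambda> \<le> R}\<close> the coefficients of \<open>A\<close> are at most \<open>R\<close>.\<close>

lemma l2norm_A0_cutoff_le:
  fixes r :: "'d::finite \<Rightarrow> real"
  assumes g: "g \<in> l2" and R: "R \<ge> 1"
  shows "l2norm (A0 r (cutoff R g)) \<le> 2 * real CARD('d) * R * l2norm g"
proof -
  define a where "a j n = (if Lambda (decr_at n j) \<le> R then A_coeff_dn r j n else 0)" for j n
  define b where "b j n = (if Lambda (incr_at n j) \<le> R then A_coeff_up r j n else 0)" for j n
  have eq: "A0 r (cutoff R g) = (\<lambda>n. \<Sum>j\<in>UNIV. wshift j (a j) g n + wshift_adj j (b j) g n)"
    unfolding A0_eq_wshift
    by (intro ext sum.cong) (auto simp: cutoff_def wshift_def wshift_adj_def a_def b_def)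
  have "cmod (a j n) \<le> R" if "1 \<le> n j" for j n
  proof (cases "Lambda (decr_at n j) \<le> R")
    case True
    have "real (n j) - 1/2 = real (decr_at n j j) + 1/2"
      using that by (simp add: of_nat_diff)
    moreover have "real (decr_at n j j) \<le> R"
      using coordinate_le_Lambda[of "decr_at n j" j] True by linarith
    ultimately have X: "\<bar>real (n j) - 1/2\<bar> \<le> R + 1/2"
      by linarith
    have "cmod (A_coeff_dn r j n) \<le> 1/2 * (R + 1/2)"
      using order.trans[OF norm_A_coeff_dn_le[of r j n] mult_left_mono[OF X]] by simp
    then show ?thesis using True R by (simp add: a_def)
  qed (use R in \<open>simp add: a_def\<close>)
  moreover have "cmod (b j n) \<le> R" for j n
  proof (cases "Lambda (incr_at n j) \<le> R")
    case True
    have "real (n j) + 1 \<le> R"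
      using coordinate_le_Lambda[of "incr_at n j" j] True by simp
    then have X: "\<bar>real (n j) + 1/2\<bar> \<le> R + 1/2"
      by linarith
    have "cmod (A_coeff_up r j n) \<le> 1/2 * (R + 1/2)"
      using order.trans[OF norm_A_coeff_up_le[of r j n] mult_left_mono[OF X]] by simp
    then show ?thesis using True R by (simp add: b_def)
  qed (use R in \<open>simp add: b_def\<close>)
  ultimately show ?thesis
    unfolding eq using R by (intro wshift_sum_bounded(2)[OF g]) auto
qed

definition comm_coeff_dn :: "(('d \<Rightarrow> nat) \<Rightarrow> real) \<Rightarrow> ('d \<Rightarrow> real) \<Rightarrow> 'd \<Rightarrow> ('d \<Rightarrow> nat) \<Rightarrow> complex" where
  "comm_coeff_dn W r j n =
     (if 1 \<le> n j then complex_of_real (sgn (r j) / 2 * (real (n j) - 1/2) * (W n - W (decr_at n j))) else 0)"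

definition comm_coeff_up :: "(('d \<Rightarrow> nat) \<Rightarrow> real) \<Rightarrow> ('d \<Rightarrow> real) \<Rightarrow> 'd \<Rightarrow> ('d \<Rightarrow> nat) \<Rightarrow> complex" where
  "comm_coeff_up W r j n = complex_of_real (- (sgn (r j) / 2) * (real (n j) + 1/2) * (W n - W (incr_at n j)))"

definition comm_op :: "(('d::finite \<Rightarrow> nat) \<Rightarrow> real) \<Rightarrow> ('d \<Rightarrow> real) \<Rightarrow> 'd seq \<Rightarrow> 'd seq" where
  "comm_op W r g = (\<lambda>n. \<Sum>j\<in>UNIV. wshift j (comm_coeff_dn W r j) g n + wshift_adj j (comm_coeff_up W r j) g n)"

lemma comm_op_eq: "comm_op W r g n = W n * (\<i> * A0 r g n) - \<i> * A0 r (mult_op W g) n"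
proof -
  have ring: "w * (\<i> * (a * x)) - \<i> * (a * (w' * x)) = (\<i> * a) * (w - w') * x" for w w' a x :: complex
    by (simp add: algebra_simps)
  have i_dn: "\<i> * A_coeff_dn r j n = complex_of_real (sgn (r j) / 2 * (real (n j) - 1/2))" for j
    by (simp add: A_coeff_dn_def field_simps)
  have i_up: "\<i> * A_coeff_up r j n = complex_of_real (- (sgn (r j) / 2) * (real (n j) + 1/2))" for j
    by (simp add: A_coeff_up_def field_simps)
  have dn: "W n * (\<i> * wshift j (A_coeff_dn r j) g n) - \<i> * wshift j (A_coeff_dn r j) (mult_op W g) n
      = wshift j (comm_coeff_dn W r j) g n" for j
    by (cases "1 \<le> n j") (simp_all only: wshift_def mult_op_def comm_coeff_dn_def if_True if_False ring i_dn,
        simp_all)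
  have up: "W n * (\<i> * wshift_adj j (A_coeff_up r j) g n) - \<i> * wshift_adj j (A_coeff_up r j) (mult_op W g) n
      = wshift_adj j (comm_coeff_up W r j) g n" for j
    unfolding wshift_adj_def mult_op_def comm_coeff_up_def by (simp only: ring i_up) simp
  show ?thesis
    unfolding A0_eq_wshift comm_op_def dn[symmetric] up[symmetric]
    by (simp add: sum_distrib_left sum_subtractf algebra_simps sum.distrib)
qed

lemma fin_supp_add: "fin_supp f \<Longrightarrow> fin_supp g \<Longrightarrow> fin_supp (\<lambda>n. f n + g n)"
  unfolding fin_supp_def by (rule finite_subset[of _ "{n. f n \<noteq> 0} \<union> {n. g n \<noteq> 0}"]) auto

lemma fin_supp_sum: "(\<And>j. fin_supp (h j)) \<Longrightarrow> fin_supp (\<lambda>n. \<Sum>j\<in>(UNIV::'d::finite set). h j n)"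
  unfolding fin_supp_def
  by (rule finite_subset[of _ "\<Union>j. {n. h j n \<noteq> 0}"]) (auto intro: ccontr simp: sum.neutral)

lemma fin_supp_A0: "fin_supp f \<Longrightarrow> fin_supp (A0 r f)"
  unfolding A0_eq_wshift by (intro fin_supp_sum fin_supp_add fin_supp_wshift fin_supp_wshift_adj)

lemma fin_supp_mult_op: "fin_supp f \<Longrightarrow> fin_supp (mult_op W f)"
  unfolding fin_supp_def mult_op_def by (rule finite_subset[of _ "{n. f n \<noteq> 0}"]) auto

lemma l2inner_sum_fin_supp:
  fixes u :: "'d::finite \<Rightarrow> 'a seq"
  assumes "fin_supp f"
  shows "l2inner f (\<lambda>n. \<Sum>j\<in>UNIV. u j n) = (\<Sum>j\<in>UNIV. l2inner f (u j))"
    "l2inner (\<lambda>n. \<Sum>j\<in>UNIV. u j n) f = (\<Sum>j\<in>UNIV. l2inner (u j) f)"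
proof -
  obtain S where S: "finite S" "\<And>n. n \<notin> S \<Longrightarrow> f n = 0"
    using assms by (auto simp: fin_supp_iff)
  show "l2inner f (\<lambda>n. \<Sum>j\<in>UNIV. u j n) = (\<Sum>j\<in>UNIV. l2inner f (u j))"
    by (simp add: l2inner_fin_supp[OF S(1)] S(2) sum_distrib_left sum.swap[of _ S])
  show "l2inner (\<lambda>n. \<Sum>j\<in>UNIV. u j n) f = (\<Sum>j\<in>UNIV. l2inner (u j) f)"
    by (simp add: l2inner_fin_supp[OF S(1)] S(2) sum_distrib_right sum.swap[of _ S])
qed

lemma l2inner_A0_fin_supp:
  assumes f: "fin_supp f" and g: "fin_supp g"
  shows "l2inner f (A0 r g) = l2inner (A0 r f) g"
proof -
  have up: "(\<lambda>m. cnj (A_coeff_dn r j (incr_at m j))) = A_coeff_up r j" for j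
    by (rule ext) (simp add: A_coeff_dn_def A_coeff_up_def field_simps)
  have dn: "wshift j (\<lambda>n. cnj (A_coeff_up r j (decr_at n j))) f = wshift j (A_coeff_dn r j) f" for j
    by (rule wshift_cong) (simp add: A_coeff_dn_def A_coeff_up_def field_simps of_nat_diff)
  have "l2inner f (A0 r g)
      = (\<Sum>j\<in>UNIV. l2inner f (wshift j (A_coeff_dn r j) g) + l2inner f (wshift_adj j (A_coeff_up r j) g))"
    unfolding A0_eq_wshift l2inner_sum_fin_supp(1)[OF f]
    using f g by (simp add: l2inner_add_right fin_supp_l2 fin_supp_wshift fin_supp_wshift_adj)
  also have "\<dots> = (\<Sum>j\<in>UNIV. l2inner (wshift_adj j (A_coeff_up r j) f) g + l2inner (wshift j (A_coeff_dn r j) f) g)"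
    unfolding l2inner_wshift l2inner_wshift_adj up dn ..
  also have "\<dots> = l2inner (A0 r f) g"
    unfolding A0_eq_wshift l2inner_sum_fin_supp(2)[OF g]
    using f g by (simp add: l2inner_add_left fin_supp_l2 fin_supp_wshift fin_supp_wshift_adj add.commute)
  finally show ?thesis .
qed

lemma commutator_form_fin_supp:
  assumes f: "fin_supp f" and g: "fin_supp g"
  shows "l2inner f (comm_op W r g)
    = l2inner (mult_op W f) (\<lambda>n. \<i> * A0 r g n) + l2inner (\<lambda>n. \<i> * A0 r f n) (mult_op W g)"
proof -
  obtain S where S: "finite S" "\<And>n. n \<notin> S \<Longrightarrow> f n = 0"
    using f by (auto simp: fin_supp_iff)
  have "l2inner f (comm_op W r g)
      = l2inner f (\<lambda>n. W n * (\<i> * A0 r g n)) - l2inner f (\<lambda>n. \<i> * A0 r (mult_op W g) n)"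
    by (simp add: comm_op_eq l2inner_fin_supp[OF S(1)] S(2) right_diff_distrib sum_subtractf)
  moreover have "l2inner f (\<lambda>n. W n * (\<i> * A0 r g n)) = l2inner (mult_op W f) (\<lambda>n. \<i> * A0 r g n)"
    unfolding l2inner_def mult_op_def by (simp add: mult.assoc mult.left_commute)
  moreover have "l2inner f (\<lambda>n. \<i> * A0 r (mult_op W g) n) = - l2inner (\<lambda>n. \<i> * A0 r f n) (mult_op W g)"
    using l2inner_A0_fin_supp[OF f fin_supp_mult_op[OF g], of r]
    by (simp add: l2inner_scale_left l2inner_scale_right)
  ultimately show ?thesis by simp
qed
section \<open>Bounds on the commutator under (H1)\<close>

locale H1_potential =
  fixes W :: "('d::finite \<Rightarrow> nat) \<Rightarrow> real" and C \<epsilon> :: real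
  assumes C_pos: "0 < C" and eps_pos: "0 < \<epsilon>"
    and H1: "\<And>j n. \<bar>W (incr_at n j) - W n\<bar> \<le> C * Lambda n powr (- \<epsilon>) / jbr (real (n j))"
begin

lemma norm_comm_coeff_up_le: "cmod (comm_coeff_up W r j n) \<le> C * Lambda n powr (- \<epsilon>)"
proof -
  have "cmod (comm_coeff_up W r j n) = \<bar>- (sgn (r j) / 2) * (real (n j) + 1/2) * (W n - W (incr_at n j))\<bar>"
    by (simp only: comm_coeff_up_def norm_of_real)
  also have "\<dots> = \<bar>sgn (r j)\<bar> / 2 * (real (n j) + 1/2) * \<bar>W (incr_at n j) - W n\<bar>"
    by (simp add: abs_mult abs_minus_commute)
  also have "\<dots> \<le> 1 / 2 * (3/2 * jbr (real (n j))) * (C * Lambda n powr (- \<epsilon>) / jbr (real (n j)))"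
    using add_half_le_jbr[of "real (n j)"] H1[of n j]
    by (intro mult_mono) (auto simp: abs_sgn_eq)
  also have "\<dots> = 3/4 * (C * Lambda n powr (- \<epsilon>))"
    using jbr_pos[of "real (n j)"] by simp
  also have "\<dots> \<le> C * Lambda n powr (- \<epsilon>)"
    using C_pos by simp
  finally show ?thesis .
qed

lemma norm_comm_coeff_dn_le:
  assumes "1 \<le> n j"
  shows "cmod (comm_coeff_dn W r j n) \<le> C * Lambda (decr_at n j) powr (- \<epsilon>)"
proof -
  define m where "m = decr_at n j"
  have n: "incr_at m j = n"
    using assms by (simp add: m_def incr_at_decr_at)
  have nj: "real (n j) - 1/2 = real (m j) + 1/2"
    using assms by (simp add: m_def of_nat_diff)
  have "comm_coeff_dn W r j n = complex_of_real (sgn (r j) / 2 * (real (m j) + 1/2) * (W n - W m))"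
    using assms by (simp only: comm_coeff_dn_def if_True nj flip: m_def)
  also have "\<dots> = comm_coeff_up W r j m"
    unfolding comm_coeff_up_def n by (rule arg_cong[where f = complex_of_real]) (simp add: field_simps)
  finally show ?thesis
    using norm_comm_coeff_up_le[of r j m] by (simp add: m_def)
qed

lemma Lambda_powr_le_1: "Lambda n powr (- \<epsilon>) \<le> 1"
  using powr_mono2'[of "- \<epsilon>" 1 "Lambda n"] one_le_Lambda[of n] eps_pos by simp

lemma comm_op_bounded:
  assumes "g \<in> l2"
  shows "comm_op W r g \<in> l2" "l2norm (comm_op W r g) \<le> 2 * real CARD('d) * C * l2norm g"
proof -
  have CL: "C * Lambda n powr (- \<epsilon>) \<le> C" for n
    using mult_left_mono[OF Lambda_powr_le_1 less_imp_le[OF C_pos]] by simp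
  have dn: "cmod (comm_coeff_dn W r j n) \<le> C" if "1 \<le> n j" for j n
    using norm_comm_coeff_dn_le[where n = n and j = j and r = r, OF that] CL[of "decr_at n j"] by linarith
  have up: "cmod (comm_coeff_up W r j n) \<le> C" for j n
    using norm_comm_coeff_up_le[of r j n] CL[of n] by linarith
  show "comm_op W r g \<in> l2" "l2norm (comm_op W r g) \<le> 2 * real CARD('d) * C * l2norm g"
    unfolding comm_op_def using wshift_sum_bounded[OF assms dn up] C_pos by auto
qed

lemma C_Lambda_powr_le_tail:
  assumes "R / 2 < L" "R > 0"
  shows "C * L powr (- \<epsilon>) \<le> C * 2 powr \<epsilon> * R powr (- \<epsilon>)"
proof -
  have "L powr (- \<epsilon>) \<le> (R / 2) powr (- \<epsilon>)"
    using assms eps_pos by (intro powr_mono2') auto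
  also have "\<dots> = R powr (- \<epsilon>) / 2 powr (- \<epsilon>)"
    using assms(2) by (simp add: powr_divide)
  also have "\<dots> = 2 powr \<epsilon> * R powr (- \<epsilon>)"
    by (simp add: powr_minus_divide)
  finally show ?thesis
    using C_pos by (simp add: mult.assoc)
qed

text \<open>The coefficients of the commutator are \<open>O(\<Lambda>\<^sup>-\<^sup>\<epsilon>)\<close>, so it is small off \<open>{\<Lambda> \<le> R}\<close>,
  on either side.\<close>

lemma l2norm_comm_op_tail_le:
  assumes g: "g \<in> l2" and R: "R \<ge> 1"
  shows "l2norm (\<lambda>n. comm_op W r g n - cutoff R (comm_op W r g) n)
      \<le> 2 * real CARD('d) * (C * 2 powr \<epsilon> * R powr (- \<epsilon>)) * l2norm g"
proof -
  define a where "a j n = (if Lambda n \<le> R then 0 else comm_coeff_dn W r j n)" for j n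
  define b where "b j n = (if Lambda n \<le> R then 0 else comm_coeff_up W r j n)" for j n
  have eq: "(\<lambda>n. comm_op W r g n - cutoff R (comm_op W r g) n)
      = (\<lambda>n. \<Sum>j\<in>UNIV. wshift j (a j) g n + wshift_adj j (b j) g n)"
  proof
    fix n
    show "comm_op W r g n - cutoff R (comm_op W r g) n = (\<Sum>j\<in>UNIV. wshift j (a j) g n + wshift_adj j (b j) g n)"
      by (cases "Lambda n \<le> R") (simp_all add: cutoff_def comm_op_def wshift_def wshift_adj_def a_def b_def cong: if_cong)
  qed
  have "cmod (a j n) \<le> C * 2 powr \<epsilon> * R powr (- \<epsilon>)" if "1 \<le> n j" for j n
  proof (cases "Lambda n \<le> R")
    case False
    have "Lambda n \<le> 2 * Lambda (decr_at n j)"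
      using Lambda_incr_at_le[of "decr_at n j" j] that by (simp add: incr_at_decr_at)
    then have "C * Lambda (decr_at n j) powr (- \<epsilon>) \<le> C * 2 powr \<epsilon> * R powr (- \<epsilon>)"
      using False R by (intro C_Lambda_powr_le_tail) auto
    then show ?thesis
      using norm_comm_coeff_dn_le[where n = n and j = j and r = r, OF that] False by (simp add: a_def)
  qed (use C_pos in \<open>simp add: a_def\<close>)
  moreover have "cmod (b j n) \<le> C * 2 powr \<epsilon> * R powr (- \<epsilon>)" for j n
  proof (cases "Lambda n \<le> R")
    case False
    then have "C * Lambda n powr (- \<epsilon>) \<le> C * 2 powr \<epsilon> * R powr (- \<epsilon>)"
      using R by (intro C_Lambda_powr_le_tail) auto
    then show ?thesis
      using norm_comm_coeff_up_le[of r j n] False by (simp add: b_def)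
  qed (use C_pos in \<open>simp add: b_def\<close>)
  ultimately show ?thesis
    unfolding eq using C_pos by (intro wshift_sum_bounded(2)[OF g]) auto
qed

lemma l2norm_comm_op_sub_cutoff_le:
  assumes g: "g \<in> l2" and R: "R \<ge> 1"
  shows "l2norm (comm_op W r (\<lambda>n. g n - cutoff R g n))
      \<le> 2 * real CARD('d) * (C * 2 powr \<epsilon> * R powr (- \<epsilon>)) * l2norm g"
proof -
  define a where "a j n = (if Lambda (decr_at n j) \<le> R then 0 else comm_coeff_dn W r j n)" for j n
  define b where "b j n = (if Lambda (incr_at n j) \<le> R then 0 else comm_coeff_up W r j n)" for j n
  have eq: "comm_op W r (\<lambda>n. g n - cutoff R g n) = (\<lambda>n. \<Sum>j\<in>UNIV. wshift j (a j) g n + wshift_adj j (b j) g n)"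
    unfolding comm_op_def
    by (intro ext sum.cong) (auto simp: cutoff_def wshift_def wshift_adj_def a_def b_def algebra_simps)
  have "cmod (a j n) \<le> C * 2 powr \<epsilon> * R powr (- \<epsilon>)" if "1 \<le> n j" for j n
  proof (cases "Lambda (decr_at n j) \<le> R")
    case False
    then have "C * Lambda (decr_at n j) powr (- \<epsilon>) \<le> C * 2 powr \<epsilon> * R powr (- \<epsilon>)"
      using R by (intro C_Lambda_powr_le_tail) auto
    then show ?thesis
      using norm_comm_coeff_dn_le[where n = n and j = j and r = r, OF that] False by (simp add: a_def)
  qed (use C_pos in \<open>simp add: a_def\<close>)
  moreover have "cmod (b j n) \<le> C * 2 powr \<epsilon> * R powr (- \<epsilon>)" for j n
  proof (cases "Lambda (incr_at n j) \<le> R")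
    case False
    then have "C * Lambda n powr (- \<epsilon>) \<le> C * 2 powr \<epsilon> * R powr (- \<epsilon>)"
      using R Lambda_incr_at_le[of n j] by (intro C_Lambda_powr_le_tail) auto
    then show ?thesis
      using norm_comm_coeff_up_le[of r j n] False by (simp add: b_def)
  qed (use C_pos in \<open>simp add: b_def\<close>)
  ultimately show ?thesis
    unfolding eq using C_pos by (intro wshift_sum_bounded(2)[OF g]) auto
qed

end
section \<open>Operators on \<open>\<ell>\<^sup>2\<close> and the regularity classes\<close>

definition l2vec_op :: "(('a \<Rightarrow> complex) \<Rightarrow> 'a \<Rightarrow> complex) \<Rightarrow> 'a l2vec \<Rightarrow> 'a l2vec" where
  "l2vec_op T x = Abs_l2vec (T (Rep_l2vec x))"

lemma bounded_op_l2: "bounded_op T \<Longrightarrow> f \<in> l2 \<Longrightarrow> T f \<in> l2"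
  unfolding bounded_op_def by blast

lemma bounded_op_linear:
  "bounded_op T \<Longrightarrow> f \<in> l2 \<Longrightarrow> g \<in> l2 \<Longrightarrow> T (\<lambda>n. a * f n + b * g n) = (\<lambda>n. a * T f n + b * T g n)"
  unfolding bounded_op_def by blast

lemma l2_tendsto_bounded_op:
  fixes T :: "('a \<Rightarrow> complex) \<Rightarrow> 'a \<Rightarrow> complex"
  assumes "bounded_op T" "\<And>k. xk k \<in> l2" "x \<in> l2" "l2_tendsto xk x F"
  shows "l2_tendsto (\<lambda>k. T (xk k)) (T x) F"
proof -
  obtain K where K: "\<And>f. f \<in> l2 \<Longrightarrow> l2norm (T f) \<le> K * l2norm f"
    using assms(1) unfolding bounded_op_def by blast
  have "T (\<lambda>n. xk k n - x n) = (\<lambda>n. T (xk k) n - T x n)" for k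
    using bounded_op_linear[OF assms(1-3), where a = 1 and b = "-1"] by simp
  then have le: "l2norm (\<lambda>n. T (xk k) n - T x n) \<le> K * l2norm (\<lambda>n. xk k n - x n)" for k
    using K[OF l2_diff[OF assms(2,3)]] by simp
  have "((\<lambda>k. K * l2norm (\<lambda>n. xk k n - x n)) \<longlongrightarrow> 0) F"
    using tendsto_mult_right_zero assms(4) unfolding l2_tendsto_def by (metis mult.commute)
  then show ?thesis
    unfolding l2_tendsto_def
    by (rule tendsto_sandwich[where f = "\<lambda>_. 0", rotated 3])
      (simp_all add: le l2norm_nonneg)
qed

lemma Rep_l2vec_op: "bounded_op T \<Longrightarrow> Rep_l2vec (l2vec_op T x) = T (Rep_l2vec x)"
  by (simp add: l2vec_op_def Abs_l2vec_inverse bounded_op_l2 Rep_l2vec)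

lemma linear_l2vec_op:
  assumes "bounded_op T"
  shows "linear (l2vec_op T)"
proof (rule linearI)
  note lin = bounded_op_linear[OF assms]
  show "l2vec_op T (x + y) = l2vec_op T x + l2vec_op T y" for x y
    using lin[OF Rep_l2vec Rep_l2vec, of 1 x 1 y]
    by (simp add: Rep_l2vec_inject[symmetric] Rep_l2vec_op[OF assms] Rep_l2vec_plus)
  show "l2vec_op T (c *\<^sub>R x) = c *\<^sub>R l2vec_op T x" for c x
    using lin[OF Rep_l2vec Rep_l2vec, of c x 0 x]
    by (simp add: Rep_l2vec_inject[symmetric] Rep_l2vec_op[OF assms] Rep_l2vec_scaleR)
qed

lemma norm_l2vec_op_le:
  "bounded_op T \<Longrightarrow> (\<And>f. f \<in> l2 \<Longrightarrow> l2norm (T f) \<le> K * l2norm f) \<Longrightarrow> norm (l2vec_op T x) \<le> K * norm x"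
  by (simp add: norm_l2vec_eq Rep_l2vec_op Rep_l2vec)

lemma bounded_linear_l2vec_op:
  assumes "bounded_op T"
  shows "bounded_linear (l2vec_op T)"
proof -
  obtain K where "\<And>f. f \<in> l2 \<Longrightarrow> l2norm (T f) \<le> K * l2norm f"
    using assms unfolding bounded_op_def by blast
  then show ?thesis
    using linear_l2vec_op[OF assms] norm_l2vec_op_le[OF assms]
    by (intro bounded_linear_intro[where K = K]) (auto simp: linear_add linear_scale mult.commute)
qed

lemma op_norm_le:
  fixes T :: "('a \<Rightarrow> complex) \<Rightarrow> 'a \<Rightarrow> complex"
  assumes "\<And>f. f \<in> l2 \<Longrightarrow> l2norm (T f) \<le> K * l2norm f" "0 \<le> K"
  shows "op_norm T \<le> K"
  unfolding op_norm_def
proof (rule cSUP_least)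
  show "{f. f \<in> l2 \<and> l2norm f \<le> 1} \<noteq> {}"
    by (auto simp: l2norm_def intro!: exI[of _ "\<lambda>_. 0"])
  show "l2norm (T f) \<le> K" if "f \<in> {f \<in> l2. l2norm f \<le> 1}" for f
    using that assms(1)[of f] mult_left_mono[of "l2norm f" 1 K] assms(2) by auto
qed

lemma nn_integral_finite_if_le_powr:
  fixes c \<delta> :: real
  assumes c: "c \<ge> 0" and \<delta>: "\<delta> > 0"
    and le: "\<And>s. 0 < s \<Longrightarrow> s \<le> 1 \<Longrightarrow> X s \<le> c * s powr (\<delta> - 1)"
  shows "(\<integral>\<^sup>+ s \<in> {0<..1}. ennreal (X s) \<partial>lborel) < \<infinity>"
proof -
  have "((\<lambda>s. c * s powr (\<delta> - 1)) has_integral c * (1 powr (\<delta> - 1 + 1) / (\<delta> - 1 + 1))) {0..1}"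
    using has_integral_powr_from_0[of "\<delta> - 1" 1] \<delta> by (intro has_integral_mult_right) auto
  then have eq: "(\<integral>\<^sup>+ s. ennreal (c * s powr (\<delta> - 1)) * indicator {0..1} s \<partial>lborel)
      = ennreal (c * (1 powr (\<delta> - 1 + 1) / (\<delta> - 1 + 1)))"
    by (rule nn_integral_has_integral_lebesgue'[rotated]) (use c in auto)
  have "(\<integral>\<^sup>+ s \<in> {0<..1}. ennreal (X s) \<partial>lborel)
      \<le> (\<integral>\<^sup>+ s. ennreal (c * s powr (\<delta> - 1)) * indicator {0..1} s \<partial>lborel)"
    by (intro nn_integral_mono) (auto simp: indicator_def intro!: ennreal_leI le)
  also have "\<dots> < \<infinity>" unfolding eq by simp
  finally show ?thesis .
qed

lemma C01_class_if_holder: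
  assumes T: "bounded_op T" and c: "c \<ge> 0" and \<delta>: "\<delta> > 0"
    and holder: "\<And>s f. 0 < s \<Longrightarrow> s \<le> 1 \<Longrightarrow> f \<in> l2 \<Longrightarrow>
      l2norm (\<lambda>n. U s (T (U (- s) f)) n - T f n) \<le> c * s powr \<delta> * l2norm f"
  shows "C01_class U T"
  unfolding C01_class_def
proof (intro conjI T nn_integral_finite_if_le_powr[OF c \<delta>])
  fix s :: real assume s: "0 < s" "s \<le> 1"
  have "op_norm (\<lambda>f n. U s (T (U (- s) f)) n - T f n) \<le> c * s powr \<delta>"
    using holder[OF s] c by (intro op_norm_le) auto
  then have "op_norm (\<lambda>f n. U s (T (U (- s) f)) n - T f n) / s \<le> c * s powr \<delta> / s"
    using s by (simp add: divide_right_mono)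
  also have "\<dots> = c * s powr (\<delta> - 1)"
    using s by (simp add: powr_diff)
  finally show "op_norm (\<lambda>f n. U s (T (U (- s) f)) n - T f n) / s \<le> c * s powr (\<delta> - 1)" .
qed

lemma C11_class_if_second_diff_le:
  assumes T: "bounded_op T" and c: "c \<ge> 0" and \<delta>: "\<delta> > 0"
    and second_diff: "\<And>s f. 0 < s \<Longrightarrow> s \<le> 1 \<Longrightarrow> f \<in> l2 \<Longrightarrow>
      l2norm (\<lambda>n. U s (T (U (- s) f)) n + U (- s) (T (U s f)) n - 2 * T f n) \<le> c * s powr (1 + \<delta>) * l2norm f"
  shows "C11_class U T"
  unfolding C11_class_def
proof (intro conjI T nn_integral_finite_if_le_powr[OF c \<delta>])
  fix s :: real assume s: "0 < s" "s \<le> 1"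
  have "op_norm (\<lambda>f n. U s (T (U (- s) f)) n + U (- s) (T (U s f)) n - 2 * T f n) \<le> c * s powr (1 + \<delta>)"
    using second_diff[OF s] c by (intro op_norm_le) auto
  then have "op_norm (\<lambda>f n. U s (T (U (- s) f)) n + U (- s) (T (U s f)) n - 2 * T f n) / s^2
      \<le> c * s powr (1 + \<delta>) / s^2"
    using s by (simp add: divide_right_mono)
  also have "\<dots> = c * s powr (\<delta> - 1)"
    using s by (simp add: powr_add power2_eq_square powr_diff)
  finally show "op_norm (\<lambda>f n. U s (T (U (- s) f)) n + U (- s) (T (U s f)) n - 2 * T f n) / s^2
      \<le> c * s powr (\<delta> - 1)" .
qed
section \<open>Regularity of \<open>W\<close> with respect to \<open>A\<close>\<close>

locale lattice_setting = H1_potential W C \<epsilon> for W :: "('d::finite \<Rightarrow> nat) \<Rightarrow> real" and C \<epsilon> +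
  fixes r :: "'d \<Rightarrow> real" and U :: "real \<Rightarrow> 'd seq \<Rightarrow> 'd seq" and M :: real
  assumes W_bounded: "\<And>n. \<bar>W n\<bar> \<le> M"
    and U_group: "unitary_group_gen U (A_graph r)"
begin

lemma bounded_op_U: "bounded_op (U s)"
  and l2norm_U: "f \<in> l2 \<Longrightarrow> l2norm (U s f) = l2norm f"
  and U_0: "f \<in> l2 \<Longrightarrow> U 0 f = f"
  and U_add: "f \<in> l2 \<Longrightarrow> U (s + t) f = U s (U t f)"
  and U_continuous: "f \<in> l2 \<Longrightarrow> l2_tendsto (\<lambda>s. U s f) (U s0 f) (at s0)"
  and U_generator: "f \<in> l2 \<Longrightarrow> (g \<in> l2 \<and> l2_tendsto (\<lambda>s n. (U s f n - f n) / complex_of_real s) g (at 0))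
      \<longleftrightarrow> (\<exists>h. A_graph r f h \<and> g = (\<lambda>n. \<i> * h n))"
  using U_group unfolding unitary_group_gen_def by blast+

lemma bounded_op_mult_op: "bounded_op (mult_op W)"
proof -
  have "f \<in> l2 \<Longrightarrow> mult_op W f \<in> l2" "f \<in> l2 \<Longrightarrow> l2norm (mult_op W f) \<le> M * l2norm f" for f
    unfolding mult_op_def using W_bounded
    by (auto intro: l2_mult_bounded[where M = M] l2norm_mult_bounded[where M = M])
  then show ?thesis
    unfolding bounded_op_def by (auto simp: mult_op_def algebra_simps)
qed

lemma bounded_op_comm_op: "bounded_op (comm_op W r)"
  unfolding bounded_op_def
proof (intro conjI ballI allI)
  show "comm_op W r (\<lambda>n. a * f n + b * g n) = (\<lambda>n. a * comm_op W r f n + b * comm_op W r g n)" for a b f g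
    unfolding comm_op_def
    by (rule ext, simp only: sum_distrib_left sum.distrib[symmetric], rule sum.cong[OF refl])
      (auto simp: wshift_def wshift_adj_def algebra_simps)
qed (use comm_op_bounded in blast)+

lemma A_graph_fin_supp: "fin_supp f \<Longrightarrow> A_graph r f (A0 r f)"
  unfolding A_graph_def
  by (auto intro!: exI[of _ "\<lambda>k. f"] fin_supp_l2 fin_supp_A0 simp: l2_tendsto_def l2norm_def)

text \<open>The form of \<open>comm_op W r\<close> agrees with \<open>\<langle>W f, iA g\<rangle> + \<langle>iA f, W g\<rangle>\<close> on finitely supported
  sequences, and both sides are continuous in the graph norm of \<open>A\<close>.\<close>

lemma commutator_form_A_graph:
  assumes "A_graph r f f'" "A_graph r g g'"
  shows "l2inner f (comm_op W r g) = l2inner (mult_op W f) (\<lambda>n. \<i> * g' n) + l2inner (\<lambda>n. \<i> * f' n) (mult_op W g)"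
proof -
  obtain fk where f: "f \<in> l2" "f' \<in> l2" "\<And>k. fin_supp (fk k)" "l2_tendsto fk f sequentially"
    "l2_tendsto (\<lambda>k. A0 r (fk k)) f' sequentially"
    using assms(1) unfolding A_graph_def by blast
  obtain gk where g: "g \<in> l2" "g' \<in> l2" "\<And>k. fin_supp (gk k)" "l2_tendsto gk g sequentially"
    "l2_tendsto (\<lambda>k. A0 r (gk k)) g' sequentially"
    using assms(2) unfolding A_graph_def by blast
  have l2: "fk k \<in> l2" "A0 r (fk k) \<in> l2" "gk k \<in> l2" "A0 r (gk k) \<in> l2" for k
    using f(3) g(3) by (auto intro: fin_supp_l2 fin_supp_A0)
  have i: "bounded_op (\<lambda>a n. \<i> * a n)"
    unfolding bounded_op_def by (auto intro: l2_scale exI[of _ 1] simp: l2norm_scale algebra_simps)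
  note W = bounded_op_mult_op and B = bounded_op_comm_op
  have iA: "(\<lambda>n. \<i> * h n) \<in> l2" if "h \<in> l2" for h
    using bounded_op_l2[OF i that] .
  have tB: "l2_tendsto (\<lambda>k. comm_op W r (gk k)) (comm_op W r g) sequentially"
    by (rule l2_tendsto_bounded_op[OF B l2(3) g(1) g(4)])
  have tWf: "l2_tendsto (\<lambda>k. mult_op W (fk k)) (mult_op W f) sequentially"
    by (rule l2_tendsto_bounded_op[OF W l2(1) f(1) f(4)])
  have tWg: "l2_tendsto (\<lambda>k. mult_op W (gk k)) (mult_op W g) sequentially"
    by (rule l2_tendsto_bounded_op[OF W l2(3) g(1) g(4)])
  have tAf: "l2_tendsto (\<lambda>k n. \<i> * A0 r (fk k) n) (\<lambda>n. \<i> * f' n) sequentially"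
    using l2_tendsto_bounded_op[OF i l2(2) f(2) f(5)] .
  have tAg: "l2_tendsto (\<lambda>k n. \<i> * A0 r (gk k) n) (\<lambda>n. \<i> * g' n) sequentially"
    using l2_tendsto_bounded_op[OF i l2(4) g(2) g(5)] .
  have L: "(\<lambda>k. l2inner (fk k) (comm_op W r (gk k))) \<longlonglongrightarrow> l2inner f (comm_op W r g)"
    using l2inner_tendsto[OF l2(1) bounded_op_l2[OF B l2(3)] f(1) bounded_op_l2[OF B g(1)] f(4) tB] .
  have R1: "(\<lambda>k. l2inner (mult_op W (fk k)) (\<lambda>n. \<i> * A0 r (gk k) n)) \<longlonglongrightarrow> l2inner (mult_op W f) (\<lambda>n. \<i> * g' n)"
    using l2inner_tendsto[OF bounded_op_l2[OF W l2(1)] iA[OF l2(4)] bounded_op_l2[OF W f(1)] iA[OF g(2)] tWf tAg] .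
  have R2: "(\<lambda>k. l2inner (\<lambda>n. \<i> * A0 r (fk k) n) (mult_op W (gk k))) \<longlonglongrightarrow> l2inner (\<lambda>n. \<i> * f' n) (mult_op W g)"
    using l2inner_tendsto[OF iA[OF l2(2)] bounded_op_l2[OF W l2(3)] iA[OF f(2)] bounded_op_l2[OF W g(1)] tAf tWg] .
  have "(\<lambda>k. l2inner (fk k) (comm_op W r (gk k)))
      \<longlonglongrightarrow> l2inner (mult_op W f) (\<lambda>n. \<i> * g' n) + l2inner (\<lambda>n. \<i> * f' n) (mult_op W g)"
    unfolding commutator_form_fin_supp[OF f(3) g(3)] by (rule tendsto_add[OF R1 R2])
  then show ?thesis
    using LIMSEQ_unique[OF L] by simp
qed

end
context lattice_setting
begin

abbreviation U_vec :: "real \<Rightarrow> ('d \<Rightarrow> nat) l2vec \<Rightarrow> ('d \<Rightarrow> nat) l2vec" where "U_vec s \<equiv> l2vec_op (U s)"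
abbreviation W_vec :: "('d \<Rightarrow> nat) l2vec \<Rightarrow> ('d \<Rightarrow> nat) l2vec" where "W_vec \<equiv> l2vec_op (mult_op W)"
abbreviation B_vec :: "('d \<Rightarrow> nat) l2vec \<Rightarrow> ('d \<Rightarrow> nat) l2vec" where "B_vec \<equiv> l2vec_op (comm_op W r)"

definition D_vec :: "('d \<Rightarrow> nat) l2vec set" where
  "D_vec = {x. \<exists>h. A_graph r (Rep_l2vec x) h}"

definition iA_vec :: "('d \<Rightarrow> nat) l2vec \<Rightarrow> ('d \<Rightarrow> nat) l2vec" where
  "iA_vec x = Abs_l2vec (\<lambda>n. \<i> * (SOME h. A_graph r (Rep_l2vec x) h) n)"

lemma U_vec_quotient_tendsto_iff:
  "((\<lambda>k. (U_vec k x - x) /\<^sub>R k) \<longlongrightarrow> y) (at 0) \<longleftrightarrow> (\<exists>h. A_graph r (Rep_l2vec x) h \<and> Rep_l2vec y = (\<lambda>n. \<i> * h n))"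
proof -
  define q where "q = (\<lambda>k n. (U k (Rep_l2vec x) n - Rep_l2vec x n) / complex_of_real k)"
  have q: "q k \<in> l2" for k
    unfolding q_def divide_inverse using bounded_op_l2[OF bounded_op_U Rep_l2vec]
    by (simp add: mult.commute l2_scale l2_diff Rep_l2vec)
  have "Rep_l2vec ((U_vec k x - x) /\<^sub>R k) = q k" for k
    by (simp add: Rep_l2vec_scaleR Rep_l2vec_minus Rep_l2vec_op[OF bounded_op_U] q_def
        divide_inverse mult.commute of_real_inverse)
  then have "(U_vec k x - x) /\<^sub>R k = Abs_l2vec (q k)" for k
    by (metis Rep_l2vec_inverse)
  then have "((\<lambda>k. (U_vec k x - x) /\<^sub>R k) \<longlongrightarrow> y) (at 0) \<longleftrightarrow> l2_tendsto q (Rep_l2vec y) (at 0)"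
    by (simp add: l2_tendsto_iff_tendsto[OF q Rep_l2vec] Rep_l2vec_inverse)
  also have "\<dots> \<longleftrightarrow> (\<exists>h. A_graph r (Rep_l2vec x) h \<and> Rep_l2vec y = (\<lambda>n. \<i> * h n))"
    using U_generator[OF Rep_l2vec, of "Rep_l2vec y" x] Rep_l2vec[of y] by (simp add: q_def)
  finally show ?thesis .
qed

lemma D_vec_iA_vec:
  assumes "A_graph r (Rep_l2vec x) h"
  shows "x \<in> D_vec" "iA_vec x = Abs_l2vec (\<lambda>n. \<i> * h n)"
proof -
  show "x \<in> D_vec" using assms by (auto simp: D_vec_def)
  have l2: "(\<lambda>n. \<i> * h' n) \<in> l2" if "A_graph r (Rep_l2vec x) h'" for h'
    using that by (simp add: A_graph_def l2_scale)
  have "A_graph r (Rep_l2vec x) (SOME h. A_graph r (Rep_l2vec x) h)"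
    using assms by (rule someI[where P = "A_graph r (Rep_l2vec x)"])
  then have "((\<lambda>k. (U_vec k x - x) /\<^sub>R k) \<longlongrightarrow> iA_vec x) (at 0)"
    unfolding U_vec_quotient_tendsto_iff iA_vec_def using l2 by (auto simp: Abs_l2vec_inverse)
  moreover have "((\<lambda>k. (U_vec k x - x) /\<^sub>R k) \<longlongrightarrow> Abs_l2vec (\<lambda>n. \<i> * h n)) (at 0)"
    unfolding U_vec_quotient_tendsto_iff using assms l2[OF assms] by (auto simp: Abs_l2vec_inverse)
  ultimately show "iA_vec x = Abs_l2vec (\<lambda>n. \<i> * h n)"
    by (rule tendsto_unique[rotated]) simp
qed

lemma D_vec_fin_supp:
  assumes "fin_supp f"
  shows "Abs_l2vec f \<in> D_vec" "iA_vec (Abs_l2vec f) = Abs_l2vec (\<lambda>n. \<i> * A0 r f n)"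
  using D_vec_iA_vec[of "Abs_l2vec f"] A_graph_fin_supp[OF assms] fin_supp_l2[OF assms]
  by (simp_all add: Abs_l2vec_inverse)

lemma D_vec_dense:
  assumes e: "e > 0"
  shows "\<exists>d\<in>D_vec. norm (x - d) < e"
proof -
  obtain R where R: "l2norm (\<lambda>n. Rep_l2vec x n - cutoff R (Rep_l2vec x) n) \<le> e / 2"
    using l2norm_sub_cutoff_le[OF Rep_l2vec, of "e / 2" x] e by auto
  have "norm (x - Abs_l2vec (cutoff R (Rep_l2vec x))) < e"
    using R e by (simp add: norm_l2vec_eq Rep_l2vec_minus Abs_l2vec_inverse[OF fin_supp_l2[OF fin_supp_cutoff]])
  then show ?thesis using D_vec_fin_supp(1)[OF fin_supp_cutoff] by blast
qed

lemma commutator_form_D_vec: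
  assumes "x \<in> D_vec" "y \<in> D_vec"
  shows "inner y (B_vec x) = inner (W_vec y) (iA_vec x) + inner (iA_vec y) (W_vec x)"
proof -
  obtain hx hy where hx: "A_graph r (Rep_l2vec x) hx" and hy: "A_graph r (Rep_l2vec y) hy"
    using assms unfolding D_vec_def by blast
  have "l2inner (Rep_l2vec y) (comm_op W r (Rep_l2vec x))
      = l2inner (mult_op W (Rep_l2vec y)) (\<lambda>n. \<i> * hx n) + l2inner (\<lambda>n. \<i> * hy n) (mult_op W (Rep_l2vec x))"
    by (rule commutator_form_A_graph[OF hy hx])
  moreover have "hx \<in> l2" "hy \<in> l2" using hx hy by (simp_all add: A_graph_def)
  ultimately show ?thesis
    by (simp add: inner_l2vec.rep_eq D_vec_iA_vec(2)[OF hx] D_vec_iA_vec(2)[OF hy] Abs_l2vec_inverse l2_scale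
        Rep_l2vec_op[OF bounded_op_mult_op] Rep_l2vec_op[OF bounded_op_comm_op])
qed

sublocale lifted: unitary_group_commutator U_vec D_vec iA_vec W_vec B_vec "2 * real CARD('d) * C"
proof (intro unitary_group_commutator.intro unitary_group.intro unitary_group_commutator_axioms.intro)
  show "linear (U_vec s)" for s by (rule linear_l2vec_op[OF bounded_op_U])
  show "norm (U_vec s x) = norm x" for s x
    by (simp add: norm_l2vec_eq Rep_l2vec_op[OF bounded_op_U] l2norm_U Rep_l2vec)
  show "U_vec s (U_vec t x) = U_vec (s + t) x" for s t x
    by (simp add: Rep_l2vec_inject[symmetric] Rep_l2vec_op[OF bounded_op_U] U_add Rep_l2vec)
  show "U_vec 0 x = x" for x
    by (simp add: Rep_l2vec_inject[symmetric] Rep_l2vec_op[OF bounded_op_U] U_0 Rep_l2vec)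
  show "((\<lambda>s. U_vec s x) \<longlongrightarrow> U_vec s0 x) (at s0)" for x s0
    using U_continuous[OF Rep_l2vec, of x s0]
    by (simp add: l2_tendsto_iff_tendsto bounded_op_l2[OF bounded_op_U] Rep_l2vec l2vec_op_def)
  show "((\<lambda>k. (U_vec k x - x) /\<^sub>R k) \<longlongrightarrow> iA_vec x) (at 0)" if x: "x \<in> D_vec" for x
  proof -
    obtain h where h: "A_graph r (Rep_l2vec x) h" using x by (auto simp: D_vec_def)
    then have "h \<in> l2" by (simp add: A_graph_def)
    then show ?thesis
      unfolding U_vec_quotient_tendsto_iff D_vec_iA_vec(2)[OF h] using h by (auto simp: Abs_l2vec_inverse l2_scale)
  qed
  show "x \<in> D_vec" if "((\<lambda>k. (U_vec k x - x) /\<^sub>R k) \<longlongrightarrow> y) (at 0)" for x y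
    using that unfolding U_vec_quotient_tendsto_iff D_vec_def by blast
  show "\<exists>d\<in>D_vec. norm (x - d) < e" if "e > 0" for x e
    by (rule D_vec_dense[OF that])
  show "bounded_linear W_vec"
    by (rule bounded_linear_l2vec_op[OF bounded_op_mult_op])
  show "inner (W_vec x) y = inner x (W_vec y)" for x y
    by (simp add: inner_l2vec.rep_eq Rep_l2vec_op[OF bounded_op_mult_op] l2inner_def mult_op_def
        algebra_simps)
  show "linear B_vec" by (rule linear_l2vec_op[OF bounded_op_comm_op])
  show "norm (B_vec x) \<le> 2 * real CARD('d) * C * norm x" for x
    by (rule norm_l2vec_op_le[OF bounded_op_comm_op comm_op_bounded(2)])
  show "0 \<le> 2 * real CARD('d) * C" using C_pos by simp
  show "inner y (B_vec x) = inner (W_vec y) (iA_vec x) + inner (iA_vec y) (W_vec x)" if "x \<in> D_vec" "y \<in> D_vec" for x y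
    by (rule commutator_form_D_vec[OF that])
qed

end
context lattice_setting
begin

lemma regularizing_projection_cutoff:
  assumes R: "R \<ge> 1"
  shows "lifted.regularizing_projection (l2vec_op (cutoff R))
    (2 * real CARD('d) * R) (2 * real CARD('d) * C * 2 powr \<epsilon> * R powr - \<epsilon>)"
  unfolding lifted.regularizing_projection_def
proof (intro allI conjI)
  note P = Rep_l2vec_op[OF bounded_op_cutoff] and B = Rep_l2vec_op[OF bounded_op_comm_op]
  fix x y z :: "('d \<Rightarrow> nat) l2vec"
  have P_eq: "l2vec_op (cutoff R) z = Abs_l2vec (cutoff R (Rep_l2vec z))"
    by (simp add: l2vec_op_def)
  show "l2vec_op (cutoff R) z \<in> D_vec"
    unfolding P_eq by (rule D_vec_fin_supp(1)[OF fin_supp_cutoff])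
  have "norm (iA_vec (l2vec_op (cutoff R) z)) = l2norm (A0 r (cutoff R (Rep_l2vec z)))"
    unfolding P_eq D_vec_fin_supp(2)[OF fin_supp_cutoff]
    by (simp add: l2norm_Abs_l2vec[symmetric] l2_scale fin_supp_l2 fin_supp_A0 fin_supp_cutoff l2norm_scale)
  then show "norm (iA_vec (l2vec_op (cutoff R) z)) \<le> 2 * real CARD('d) * R * norm z"
    using l2norm_A0_cutoff_le[OF Rep_l2vec R] by (simp add: norm_l2vec_eq)
  show "l2vec_op (cutoff R) (l2vec_op (cutoff R) z) = l2vec_op (cutoff R) z"
    by (simp add: Rep_l2vec_inject[symmetric] P cutoff_def fun_eq_iff)
  show "inner (l2vec_op (cutoff R) x) y = inner x (l2vec_op (cutoff R) y)"
    unfolding inner_l2vec.rep_eq P l2inner_def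
    by (rule arg_cong[where f = Re], rule infsum_cong) (simp add: cutoff_def)
  show "l2vec_op (cutoff R) (x - y) = l2vec_op (cutoff R) x - l2vec_op (cutoff R) y"
    by (simp add: Rep_l2vec_inject[symmetric] P Rep_l2vec_minus cutoff_def fun_eq_iff)
  show "norm (B_vec z - l2vec_op (cutoff R) (B_vec z)) \<le> 2 * real CARD('d) * C * 2 powr \<epsilon> * R powr - \<epsilon> * norm z"
    using l2norm_comm_op_tail_le[OF Rep_l2vec R, of r z]
    by (simp add: norm_l2vec_eq Rep_l2vec_minus P B mult.assoc)
  show "norm (B_vec (z - l2vec_op (cutoff R) z)) \<le> 2 * real CARD('d) * C * 2 powr \<epsilon> * R powr - \<epsilon> * norm z"
    using l2norm_comm_op_sub_cutoff_le[OF Rep_l2vec R, of r z]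
    by (simp add: norm_l2vec_eq Rep_l2vec_minus P B mult.assoc)
qed

lemma conjB_vec_holder:
  obtains c where "c \<ge> 0"
    "\<And>t w. norm (lifted.conjB w t - B_vec w) \<le> c * \<bar>t\<bar> powr (\<epsilon> / (1 + \<epsilon>)) * norm w"
proof -
  have "\<exists>P. lifted.regularizing_projection P (2 * real CARD('d) * R) (2 * real CARD('d) * C * 2 powr \<epsilon> * R powr - \<epsilon>)"
    if "R \<ge> 1" for R
    using regularizing_projection_cutoff[OF that] by blast
  then have "\<exists>c\<ge>0. \<forall>t w. norm (lifted.conjB w t - B_vec w) \<le> c * \<bar>t\<bar> powr (\<epsilon> / (1 + \<epsilon>)) * norm w"
    using C_pos by (intro lifted.conjB_holder[OF eps_pos,
        where ca = "2 * real CARD('d) * C * 2 powr \<epsilon>" and cb = "2 * real CARD('d)"]) auto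
  then obtain c where "c \<ge> 0"
    and "\<forall>t w. norm (lifted.conjB w t - B_vec w) \<le> c * \<bar>t\<bar> powr (\<epsilon> / (1 + \<epsilon>)) * norm w"
    by blast
  then show ?thesis using that by blast
qed

lemma Rep_conjW: "f \<in> l2 \<Longrightarrow> Rep_l2vec (lifted.conjW (Abs_l2vec f) s) = U s (mult_op W (U (- s) f))"
  by (simp add: lifted.conjW_def Rep_l2vec_op bounded_op_U bounded_op_mult_op Abs_l2vec_inverse)

lemma Rep_conjB: "f \<in> l2 \<Longrightarrow> Rep_l2vec (lifted.conjB (Abs_l2vec f) s) = U s (comm_op W r (U (- s) f))"
  by (simp add: lifted.conjB_def Rep_l2vec_op bounded_op_U bounded_op_comm_op Abs_l2vec_inverse)

lemma C1_class_mult_op: "C1_class U (mult_op W)"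
  unfolding C1_class_def
proof (intro conjI ballI bounded_op_mult_op)
  fix f :: "'d seq" assume f: "f \<in> l2"
  define x where "x = Abs_l2vec f"
  have eq: "(\<lambda>s. U s (mult_op W (U (- s) f))) = (\<lambda>s. Rep_l2vec (lifted.conjW x s))"
    by (simp add: x_def Rep_conjW f)
  have quotient: "l2_tendsto (\<lambda>h n. (Rep_l2vec (lifted.conjW x (s + h)) n - Rep_l2vec (lifted.conjW x s) n) / h)
      (Rep_l2vec (- lifted.conjB x s)) (at 0)" for s
  proof -
    have "(\<lambda>n. (Rep_l2vec (lifted.conjW x (s + h)) n - Rep_l2vec (lifted.conjW x s) n) / h)
        = Rep_l2vec ((lifted.conjW x (s + h) - lifted.conjW x s) /\<^sub>R h)" for h
      by (simp add: Rep_l2vec_scaleR Rep_l2vec_minus divide_inverse mult.commute of_real_inverse)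
    then show ?thesis
      by (simp add: l2_tendsto_Rep_l2vec_iff lifted.conjW_quotient_tendsto)
  qed
  have continuous: "l2_tendsto (\<lambda>s. Rep_l2vec (- lifted.conjB x s)) (Rep_l2vec (- lifted.conjB x s)) (at s)" for s
    unfolding l2_tendsto_Rep_l2vec_iff by (intro tendsto_minus lifted.tendsto_conjB)
  show "strongly_C1 (\<lambda>s. U s (mult_op W (U (- s) f)))"
    unfolding eq strongly_C1_def
    by (intro exI[of _ "\<lambda>s. Rep_l2vec (- lifted.conjB x s)"] conjI allI quotient continuous Rep_l2vec)
qed

lemma C01_class_comm_op: "C01_class U (comm_op W r)"
proof -
  obtain c where c: "c \<ge> 0"
    and holder: "\<And>t w. norm (lifted.conjB w t - B_vec w) \<le> c * \<bar>t\<bar> powr (\<epsilon> / (1 + \<epsilon>)) * norm w"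
    using conjB_vec_holder by blast
  show ?thesis
  proof (rule C01_class_if_holder[OF bounded_op_comm_op c])
    show "0 < \<epsilon> / (1 + \<epsilon>)" using eps_pos by simp
    fix s :: real and f :: "'d seq"
    assume s: "0 < s" "s \<le> 1" and f: "f \<in> l2"
    have "l2norm (\<lambda>n. U s (comm_op W r (U (- s) f)) n - comm_op W r f n)
        = norm (lifted.conjB (Abs_l2vec f) s - B_vec (Abs_l2vec f))"
      using f by (simp add: norm_l2vec_eq Rep_l2vec_minus Rep_conjB Rep_l2vec_op[OF bounded_op_comm_op]
          Abs_l2vec_inverse)
    also have "\<dots> \<le> c * s powr (\<epsilon> / (1 + \<epsilon>)) * l2norm f"
      using holder[of "Abs_l2vec f" s] s f by (simp add: l2norm_Abs_l2vec)
    finally show "l2norm (\<lambda>n. U s (comm_op W r (U (- s) f)) n - comm_op W r f n)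
        \<le> c * s powr (\<epsilon> / (1 + \<epsilon>)) * l2norm f" .
  qed
qed

lemma C11_class_mult_op: "C11_class U (mult_op W)"
proof -
  define \<delta> where "\<delta> = \<epsilon> / (1 + \<epsilon>)"
  have \<delta>: "0 < \<delta>" using eps_pos by (simp add: \<delta>_def)
  obtain c where c: "c \<ge> 0"
    and holder: "\<And>t w. norm (lifted.conjB w t - B_vec w) \<le> c * \<bar>t\<bar> powr \<delta> * norm w"
    unfolding \<delta>_def using conjB_vec_holder by blast
  show ?thesis
  proof (rule C11_class_if_second_diff_le[OF bounded_op_mult_op _ \<delta>])
    show "0 \<le> c * 2 powr \<delta>" using c by simp
    fix s :: real and f :: "'d seq"
    assume s: "0 < s" "s \<le> 1" and f: "f \<in> l2"
    define x where "x = Abs_l2vec f"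
    have "l2norm (\<lambda>n. U s (mult_op W (U (- s) f)) n + U (- s) (mult_op W (U s f)) n - 2 * mult_op W f n)
        = norm (lifted.conjW x s + lifted.conjW x (- s) - 2 *\<^sub>R W_vec x)"
      using f by (simp add: x_def norm_l2vec_eq Rep_l2vec_minus Rep_l2vec_plus Rep_l2vec_scaleR Rep_conjW
          Rep_l2vec_op[OF bounded_op_mult_op] Abs_l2vec_inverse)
    also have "\<dots> \<le> s * (c * (2 * s) powr \<delta>) * norm x"
      using s by (intro lifted.norm_conjW_second_diff_le[OF c \<delta> _ holder]) simp
    also have "\<dots> = c * 2 powr \<delta> * s powr (1 + \<delta>) * l2norm f"
      using s f by (simp add: x_def l2norm_Abs_l2vec powr_add powr_mult)
    finally show "l2norm (\<lambda>n. U s (mult_op W (U (- s) f)) n + U (- s) (mult_op W (U s f)) n - 2 * mult_op W f n)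
        \<le> c * 2 powr \<delta> * s powr (1 + \<delta>) * l2norm f" .
  qed
qed

end

theorem lemma5p6:
  fixes W :: "('d::finite \<Rightarrow> nat) \<Rightarrow> real"
    and r :: "'d \<Rightarrow> real"
    and U :: "real \<Rightarrow> 'd seq \<Rightarrow> 'd seq"
  assumes r_nz: "\<forall>j. r j \<noteq> 0"
    and W_bdd: "\<exists>M. \<forall>n. \<bar>W n\<bar> \<le> M"
    and H0: "\<forall>e>0. \<exists>R. \<forall>n. eucl_abs n > R \<longrightarrow> \<bar>W n\<bar> < e"
    and H1: "\<exists>C>0. \<exists>\<epsilon>>0. \<forall>j n. \<bar>W (n(j := n j + 1)) - W n\<bar>
                 \<le> C * Lambda n powr (- \<epsilon>) / jbr (real (n j))"
    and U: "unitary_group_gen U (A_graph r)"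
  shows "C1_class U (mult_op W)
    \<and> (\<exists>B. bounded_op B
          \<and> (\<forall>f f' g g'. A_graph r f f' \<longrightarrow> A_graph r g g' \<longrightarrow>
               l2inner f (B g) = l2inner (mult_op W f) (\<lambda>n. \<i> * g' n)
                                 + l2inner (\<lambda>n. \<i> * f' n) (mult_op W g))
          \<and> C01_class U B)
    \<and> C11_class U (mult_op W)"
proof -
  obtain M where "\<And>n. \<bar>W n\<bar> \<le> M"
    using W_bdd by blast
  moreover obtain C \<epsilon> where "H1_potential W C \<epsilon>"
    using H1 unfolding H1_potential_def by blast
  ultimately interpret lattice_setting W C \<epsilon> r U M
    using U by (simp add: lattice_setting_def lattice_setting_axioms_def)
  show ?thesis
    using C1_class_mult_op bounded_op_comm_op commutator_form_A_graph C01_class_comm_op C11_class_mult_op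
    by blast
qed

end
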